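(* Let $T$ be a tree and let a group $\Gamma$ act on $T$ by automorphisms such that the action is minimal and strongly hyperbolic. Let $e$ be an edge of $T$ and suppose $g\in\Gamma$ fixes every point of $Z_B(e)$. Then $g$ fixes every point of $Z(e)$. In particular, the fixator subgroups in $\Gamma$ of $Z_0(e)$, of $Z_B(e)$, and of $Z(e)\cap\overline{\partial T}$ coincide.
   Context: A tree $T$ has vertex set $V$ and edge set $E$ with source/range maps $s,r$ and an inversion $e\mapsto\bar e$ ($s(\bar e)=r(e)$); $d$ is the path metric on vertices. A ray is a sequence $(r_i)_{i\ge0}$ of vertices with $d(r_i,r_{i+n})=n$; two rays are cofinal if they eventually agree up to a shift of indices; $\partial T$ is the set of cofinality classes of rays. For an edge $e$: $Z_0(e)=\{v\in V: d(v,s(e))>d(v,r(e))\}$; $Z_B(e)\subseteq\partial T$ is the set of classes of rays $(r_i)$ with $r_j=s(e), r_{j+1}=r(e)$ for some $j$; $Z(e)=Z_0(e)\cup Z_B(e)$. The shadow topology on $T\cup\partial T$ (identifying $T$ with $V$) is generated by the subbase $\{Z(e): e\in E\}$; it is compact Hausdorff, and $\overline{\partial T}$ denotes the closure of $\partial T$. Automorphisms of $T$ act on $T\cup\partial T$. An automorphism is hyperbolic if it fixes no vertex and inverts no edge; such an automorphism has exactly two fixed points in $T\cup\partial T$, both in $\partial T$. An action of $\Gamma$ on $T$ is minimal if $T$ has no proper $\Gamma$-invariant subtree, and strongly hyperbolic if $\Gamma$ contains two hyperbolic automorphisms with disjoint fixed point sets. *)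

theory Defs
  imports "HOL-Analysis.Analysis" "HOL-Algebra.Group_Action"
begin

text \<open>The (oriented) edges are the ordered pairs (a,b) of adjacent
vertices; s(a,b) = a, r(a,b) = b, and the inversion is (a,b) -> (b,a).
(For a tree, which has no multiple edges, this is the same as a Serre graph.)\<close>

definition is_path :: "'v set \<Rightarrow> ('v \<Rightarrow> 'v \<Rightarrow> bool) \<Rightarrow> 'v list \<Rightarrow> bool" where
  "is_path V adj p \<longleftrightarrow> p \<noteq> [] \<and> set p \<subseteq> V \<and>
     (\<forall>i. Suc i < length p \<longrightarrow> adj (p ! i) (p ! Suc i))"

definition reduced_path :: "'v set \<Rightarrow> ('v \<Rightarrow> 'v \<Rightarrow> bool) \<Rightarrow> 'v list \<Rightarrow> bool" where
  "reduced_path V adj p \<longleftrightarrow> is_path V adj p \<and>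
     (\<forall>i. Suc (Suc i) < length p \<longrightarrow> p ! i \<noteq> p ! Suc (Suc i))"

definition is_tree :: "'v set \<Rightarrow> ('v \<Rightarrow> 'v \<Rightarrow> bool) \<Rightarrow> bool" where
  "is_tree V adj \<longleftrightarrow> V \<noteq> {} \<and>
     (\<forall>u v. adj u v \<longrightarrow> u \<in> V \<and> v \<in> V \<and> u \<noteq> v \<and> adj v u) \<and>
     (\<forall>u\<in>V. \<forall>v\<in>V. \<exists>p. is_path V adj p \<and> hd p = u \<and> last p = v) \<and>
     (\<forall>p. reduced_path V adj p \<and> hd p = last p \<longrightarrow> length p = 1)"

definition edges :: "'v set \<Rightarrow> ('v \<Rightarrow> 'v \<Rightarrow> bool) \<Rightarrow> ('v \<times> 'v) set" where
  "edges V adj = {(a, b). a \<in> V \<and> b \<in> V \<and> adj a b}"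

definition tdist :: "'v set \<Rightarrow> ('v \<Rightarrow> 'v \<Rightarrow> bool) \<Rightarrow> 'v \<Rightarrow> 'v \<Rightarrow> nat" where
  "tdist V adj u v = (LEAST n. \<exists>p. is_path V adj p \<and> hd p = u \<and> last p = v \<and> length p = Suc n)"

definition is_ray :: "'v set \<Rightarrow> ('v \<Rightarrow> 'v \<Rightarrow> bool) \<Rightarrow> (nat \<Rightarrow> 'v) \<Rightarrow> bool" where
  "is_ray V adj \<rho> \<longleftrightarrow> (\<forall>i. \<rho> i \<in> V) \<and> (\<forall>i n. tdist V adj (\<rho> i) (\<rho> (i + n)) = n)"

definition cofinal :: "(nat \<Rightarrow> 'v) \<Rightarrow> (nat \<Rightarrow> 'v) \<Rightarrow> bool" where
  "cofinal \<rho> \<sigma> \<longleftrightarrow> (\<exists>k m. \<forall>i. \<rho> (i + k) = \<sigma> (i + m))"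

definition rays :: "'v set \<Rightarrow> ('v \<Rightarrow> 'v \<Rightarrow> bool) \<Rightarrow> (nat \<Rightarrow> 'v) set" where
  "rays V adj = {\<rho>. is_ray V adj \<rho>}"

definition boundary :: "'v set \<Rightarrow> ('v \<Rightarrow> 'v \<Rightarrow> bool) \<Rightarrow> (nat \<Rightarrow> 'v) set set" where
  "boundary V adj = rays V adj // {(\<rho>, \<sigma>). \<rho> \<in> rays V adj \<and> \<sigma> \<in> rays V adj \<and> cofinal \<rho> \<sigma>}"

text \<open>Points of T \<union> \<partial>T: vertices (Inl) and boundary points (Inr).\<close>
type_synonym 'v tpoint = "'v + (nat \<Rightarrow> 'v) set"

definition points :: "'v set \<Rightarrow> ('v \<Rightarrow> 'v \<Rightarrow> bool) \<Rightarrow> 'v tpoint set" where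
  "points V adj = Inl ` V \<union> Inr ` boundary V adj"

definition Z0 :: "'v set \<Rightarrow> ('v \<Rightarrow> 'v \<Rightarrow> bool) \<Rightarrow> 'v \<times> 'v \<Rightarrow> 'v set" where
  "Z0 V adj e = {v \<in> V. tdist V adj v (fst e) > tdist V adj v (snd e)}"

definition ZB :: "'v set \<Rightarrow> ('v \<Rightarrow> 'v \<Rightarrow> bool) \<Rightarrow> 'v \<times> 'v \<Rightarrow> (nat \<Rightarrow> 'v) set set" where
  "ZB V adj e = {c \<in> boundary V adj. \<exists>\<rho>\<in>c. \<exists>j. \<rho> j = fst e \<and> \<rho> (Suc j) = snd e}"

definition Z :: "'v set \<Rightarrow> ('v \<Rightarrow> 'v \<Rightarrow> bool) \<Rightarrow> 'v \<times> 'v \<Rightarrow> 'v tpoint set" where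
  "Z V adj e = Inl ` Z0 V adj e \<union> Inr ` ZB V adj e"

text \<open>Shadow topology on T \<union> \<partial>T, generated by the subbase {Z(e)} (the whole
space is added to the subbase, as usual for subbases, to fix the topspace).\<close>
definition shadow_topology :: "'v set \<Rightarrow> ('v \<Rightarrow> 'v \<Rightarrow> bool) \<Rightarrow> 'v tpoint topology" where
  "shadow_topology V adj =
     topology_generated_by (insert (points V adj) ((Z V adj) ` edges V adj))"

definition boundary_closure :: "'v set \<Rightarrow> ('v \<Rightarrow> 'v \<Rightarrow> bool) \<Rightarrow> 'v tpoint set" where
  "boundary_closure V adj = shadow_topology V adj closure_of (Inr ` boundary V adj)"

definition is_automorphism :: "'v set \<Rightarrow> ('v \<Rightarrow> 'v \<Rightarrow> bool) \<Rightarrow> ('v \<Rightarrow> 'v) \<Rightarrow> bool" where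
  "is_automorphism V adj f \<longleftrightarrow> bij_betw f V V \<and>
     (\<forall>u\<in>V. \<forall>v\<in>V. adj (f u) (f v) \<longleftrightarrow> adj u v)"

definition act_pt :: "('v \<Rightarrow> 'v) \<Rightarrow> 'v tpoint \<Rightarrow> 'v tpoint" where
  "act_pt f x = (case x of Inl v \<Rightarrow> Inl (f v) | Inr c \<Rightarrow> Inr ((\<lambda>\<rho>. f \<circ> \<rho>) ` c))"

definition fixed_points :: "'v set \<Rightarrow> ('v \<Rightarrow> 'v \<Rightarrow> bool) \<Rightarrow> ('v \<Rightarrow> 'v) \<Rightarrow> 'v tpoint set" where
  "fixed_points V adj f = {x \<in> points V adj. act_pt f x = x}"

definition hyperbolic :: "'v set \<Rightarrow> ('v \<Rightarrow> 'v \<Rightarrow> bool) \<Rightarrow> ('v \<Rightarrow> 'v) \<Rightarrow> bool" where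
  "hyperbolic V adj f \<longleftrightarrow> is_automorphism V adj f \<and>
     (\<forall>v\<in>V. f v \<noteq> v) \<and> (\<forall>u\<in>V. \<forall>v\<in>V. adj u v \<longrightarrow> \<not> (f u = v \<and> f v = u))"

definition acts_on_tree :: "('g, 'b) monoid_scheme \<Rightarrow> 'v set \<Rightarrow> ('v \<Rightarrow> 'v \<Rightarrow> bool) \<Rightarrow> ('g \<Rightarrow> 'v \<Rightarrow> 'v) \<Rightarrow> bool" where
  "acts_on_tree G V adj \<phi> \<longleftrightarrow> is_tree V adj \<and> group_action G V \<phi> \<and>
     (\<forall>g\<in>carrier G. is_automorphism V adj (\<phi> g))"

definition subtree :: "'v set \<Rightarrow> ('v \<Rightarrow> 'v \<Rightarrow> bool) \<Rightarrow> 'v set \<Rightarrow> bool" where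
  "subtree V adj W \<longleftrightarrow> W \<noteq> {} \<and> W \<subseteq> V \<and>
     (\<forall>u\<in>W. \<forall>v\<in>W. \<exists>p. is_path W adj p \<and> hd p = u \<and> last p = v)"

definition minimal_action :: "('g, 'b) monoid_scheme \<Rightarrow> 'v set \<Rightarrow> ('v \<Rightarrow> 'v \<Rightarrow> bool) \<Rightarrow> ('g \<Rightarrow> 'v \<Rightarrow> 'v) \<Rightarrow> bool" where
  "minimal_action G V adj \<phi> \<longleftrightarrow>
     (\<forall>W. subtree V adj W \<and> (\<forall>g\<in>carrier G. \<phi> g ` W \<subseteq> W) \<longrightarrow> W = V)"

definition strongly_hyperbolic :: "('g, 'b) monoid_scheme \<Rightarrow> 'v set \<Rightarrow> ('v \<Rightarrow> 'v \<Rightarrow> bool) \<Rightarrow> ('g \<Rightarrow> 'v \<Rightarrow> 'v) \<Rightarrow> bool" where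
  "strongly_hyperbolic G V adj \<phi> \<longleftrightarrow>
     (\<exists>g\<in>carrier G. \<exists>h\<in>carrier G. hyperbolic V adj (\<phi> g) \<and> hyperbolic V adj (\<phi> h) \<and>
        fixed_points V adj (\<phi> g) \<inter> fixed_points V adj (\<phi> h) = {})"

definition fixator :: "('g, 'b) monoid_scheme \<Rightarrow> ('g \<Rightarrow> 'v \<Rightarrow> 'v) \<Rightarrow> 'v tpoint set \<Rightarrow> 'g set" where
  "fixator G \<phi> S = {g \<in> carrier G. \<forall>x\<in>S. act_pt (\<phi> g) x = x}"

end

theory Submission
  imports Defs
begin

text \<open>Minimality together with a hyperbolic element makes the tree leafless, and, using two
  hyperbolic elements without common fixed point, puts a branch point into every half-tree
  \<open>Z\<^sub>0(e)\<close>. An automorphism \<open>g\<close> fixing every end of \<open>Z\<^sub>B(e)\<close> then fixes the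
  centre of a tripod of rays with ends in \<open>Z\<^sub>B(e)\<close>, since the shifts by which \<open>g\<close> moves
  along three pairwise diverging rays must all vanish. From one fixed vertex of \<open>Z\<^sub>0(e)\<close>
  the fixed ends propagate: going back towards \<open>e\<close>, a moved neighbour would start a ray with
  end in \<open>Z\<^sub>B(e)\<close> that \<open>g\<close> must fix pointwise, so the head \<open>r(e)\<close> is fixed; and every
  vertex of \<open>Z\<^sub>0(e)\<close> lies on a ray from \<open>r(e)\<close> to a fixed end, which is then fixed pointwise.
  For the fixator identities note that \<open>Z\<^sub>B(e) \<subseteq> Z(e) \<inter> closure(\<partial>T) \<subseteq> Z(e)\<close>, and that
  an automorphism fixing \<open>Z\<^sub>0(e)\<close> fixes every ray through \<open>e\<close> from \<open>r(e)\<close> on.\<close>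

declare upt_Suc[simp del]

section \<open>Walks in a tree\<close>

definition walk :: "'v set \<Rightarrow> ('v \<Rightarrow> 'v \<Rightarrow> bool) \<Rightarrow> (nat \<Rightarrow> 'v) \<Rightarrow> nat \<Rightarrow> bool" where
  "walk V adj w n \<longleftrightarrow> (\<forall>i\<le>n. w i \<in> V) \<and> (\<forall>i<n. adj (w i) (w (Suc i)))"

definition non_backtracking :: "(nat \<Rightarrow> 'v) \<Rightarrow> nat \<Rightarrow> bool" where
  "non_backtracking w n \<longleftrightarrow> (\<forall>i. i + 2 \<le> n \<longrightarrow> w i \<noteq> w (i + 2))"

definition walk_append :: "(nat \<Rightarrow> 'v) \<Rightarrow> nat \<Rightarrow> (nat \<Rightarrow> 'v) \<Rightarrow> nat \<Rightarrow> 'v" where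
  "walk_append w n v = (\<lambda>k. if k \<le> n then w k else v (k - n))"

definition edge_walk :: "'v \<Rightarrow> 'v \<Rightarrow> nat \<Rightarrow> 'v" where
  "edge_walk u v = (\<lambda>i. if i = 0 then u else v)"

lemma is_path_map_iff_walk: "is_path V adj (map w [0..<Suc n]) \<longleftrightarrow> walk V adj w n"
proof -
  have "set (map w [0..<Suc n]) \<subseteq> V \<longleftrightarrow> (\<forall>i\<le>n. w i \<in> V)"
    by (auto simp: image_subset_iff less_Suc_eq_le)
  then show ?thesis unfolding is_path_def walk_def by auto
qed

lemma reduced_path_map_iff:
  "reduced_path V adj (map w [0..<Suc n]) \<longleftrightarrow> walk V adj w n \<and> non_backtracking w n"
  unfolding reduced_path_def non_backtracking_def is_path_map_iff_walk by (auto simp: add_2_eq_Suc')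

lemma ex_path_iff_ex_walk:
  "(\<exists>p. is_path V adj p \<and> hd p = u \<and> last p = v \<and> length p = Suc n) \<longleftrightarrow>
   (\<exists>w. walk V adj w n \<and> w 0 = u \<and> w n = v)"
proof
  assume "\<exists>p. is_path V adj p \<and> hd p = u \<and> last p = v \<and> length p = Suc n"
  then obtain p where p: "is_path V adj p" "hd p = u" "last p = v" "length p = Suc n" by blast
  then have "p = map ((!) p) [0..<Suc n]" by (metis map_nth)
  then have "walk V adj ((!) p) n" using p(1) is_path_map_iff_walk by metis
  moreover have "p \<noteq> []" using p(4) by auto
  then have "p ! 0 = u" "p ! n = v" using p by (simp_all add: hd_conv_nth last_conv_nth)
  ultimately show "\<exists>w. walk V adj w n \<and> w 0 = u \<and> w n = v" by blast
next
  assume "\<exists>w. walk V adj w n \<and> w 0 = u \<and> w n = v"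
  then obtain w where w: "walk V adj w n" "w 0 = u" "w n = v" by blast
  then have "is_path V adj (map w [0..<Suc n])" using is_path_map_iff_walk by metis
  moreover have "hd (map w [0..<Suc n]) = u" using w(2) by (simp add: hd_map)
  moreover have "last (map w [0..<Suc n]) = v" using w(3) by (simp add: upt_Suc)
  ultimately show "\<exists>p. is_path V adj p \<and> hd p = u \<and> last p = v \<and> length p = Suc n"
    by (intro exI[of _ "map w [0..<Suc n]"]) simp
qed

lemma tdist_eq_Least_walk: "tdist V adj u v = (LEAST n. \<exists>w. walk V adj w n \<and> w 0 = u \<and> w n = v)"
  unfolding tdist_def ex_path_iff_ex_walk ..

lemma walk_mono: "walk V adj w n \<Longrightarrow> m \<le> n \<Longrightarrow> walk V adj w m"
  unfolding walk_def by auto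

lemma non_backtracking_mono: "non_backtracking w n \<Longrightarrow> m \<le> n \<Longrightarrow> non_backtracking w m"
  unfolding non_backtracking_def by auto

lemma walk_shift: "walk V adj w n \<Longrightarrow> i \<le> n \<Longrightarrow> walk V adj (\<lambda>k. w (i + k)) (n - i)"
  unfolding walk_def by auto

lemma non_backtracking_shift: "non_backtracking w n \<Longrightarrow> non_backtracking (\<lambda>k. w (i + k)) (n - i)"
  unfolding non_backtracking_def by (auto simp: add.assoc)

lemma non_backtracking_rev:
  assumes "non_backtracking w n"
  shows "non_backtracking (\<lambda>k. w (n - k)) n"
  unfolding non_backtracking_def
proof (intro allI impI)
  fix i assume i: "i + 2 \<le> n"
  then have "w (n - (i + 2)) \<noteq> w (n - (i + 2) + 2)" using assms unfolding non_backtracking_def by auto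
  moreover have "n - (i + 2) + 2 = n - i" using i by auto
  ultimately show "w (n - i) \<noteq> w (n - (i + 2))" by metis
qed

lemma walk_append_walk:
  assumes "walk V adj w n" "walk V adj v m" "w n = v 0"
  shows "walk V adj (walk_append w n v) (n + m)"
  unfolding walk_def
proof (intro conjI allI impI)
  fix k assume "k \<le> n + m"
  then show "walk_append w n v k \<in> V" using assms unfolding walk_def walk_append_def by auto
next
  fix k assume k: "k < n + m"
  show "adj (walk_append w n v k) (walk_append w n v (Suc k))"
  proof (cases "k < n")
    case True
    then show ?thesis using assms(1) unfolding walk_def walk_append_def by auto
  next
    case False
    then have "walk_append w n v k = v (k - n)" "walk_append w n v (Suc k) = v (Suc (k - n))"
      using assms(3) unfolding walk_append_def by (auto simp: Suc_diff_le)
    moreover have "k - n < m" using k False by arith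
    ultimately show ?thesis using assms(2) unfolding walk_def by auto
  qed
qed

lemma walk_append_non_backtracking:
  assumes "non_backtracking w n" "non_backtracking v m" "w n = v 0"
    and "0 < n \<and> 0 < m \<longrightarrow> w (n - 1) \<noteq> v 1"
  shows "non_backtracking (walk_append w n v) (n + m)"
  unfolding non_backtracking_def
proof (intro allI impI)
  fix k assume k: "k + 2 \<le> n + m"
  consider "k + 2 \<le> n" | "n \<le> k" | "k = n - 1" "0 < n" "0 < m" using k by linarith
  then show "walk_append w n v k \<noteq> walk_append w n v (k + 2)"
  proof cases
    case 1
    then show ?thesis using assms(1) unfolding non_backtracking_def walk_append_def by auto
  next
    case 2
    then have "walk_append w n v k = v (k - n)" "walk_append w n v (k + 2) = v (k - n + 2)"
      using assms(3) unfolding walk_append_def by (auto simp: Suc_diff_le)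
    then show ?thesis using assms(2) k 2 unfolding non_backtracking_def by auto
  next
    case 3
    then show ?thesis using assms(4) unfolding walk_append_def by auto
  qed
qed

lemma walk_append_start [simp]: "walk_append w n v 0 = w 0"
  unfolding walk_append_def by simp

lemma walk_append_end: "v 0 = w n \<Longrightarrow> walk_append w n v (n + m) = v m"
  unfolding walk_append_def by auto

locale tree =
  fixes V :: "'v set" and adj :: "'v \<Rightarrow> 'v \<Rightarrow> bool"
  assumes is_tree: "is_tree V adj"
begin

lemma adj_in_V: "adj u v \<Longrightarrow> u \<in> V \<and> v \<in> V"
  using is_tree unfolding is_tree_def by blast

lemma adj_sym: "adj u v \<Longrightarrow> adj v u"
  using is_tree unfolding is_tree_def by blast

lemma V_nonempty: "V \<noteq> {}"
  using is_tree unfolding is_tree_def by blast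

lemma walk_exists:
  assumes "u \<in> V" "v \<in> V"
  shows "\<exists>w n. walk V adj w n \<and> w 0 = u \<and> w n = v"
proof -
  obtain p where p: "is_path V adj p" "hd p = u" "last p = v"
    using is_tree assms unfolding is_tree_def by blast
  then have "length p = Suc (length p - 1)" unfolding is_path_def by auto
  then show ?thesis using p ex_path_iff_ex_walk by metis
qed

lemma closed_non_backtracking_walk:
  assumes "walk V adj w n" "non_backtracking w n" "w 0 = w n"
  shows "n = 0"
proof -
  have "reduced_path V adj (map w [0..<Suc n])" using assms reduced_path_map_iff by metis
  moreover have "hd (map w [0..<Suc n]) = w 0" "last (map w [0..<Suc n]) = w n"
    by (simp add: hd_map hd_upt, simp add: upt_Suc)
  ultimately have "length (map w [0..<Suc n]) = 1" using is_tree assms(3) unfolding is_tree_def by metis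
  then show "n = 0" by simp
qed

lemma walk_rev: "walk V adj w n \<Longrightarrow> walk V adj (\<lambda>k. w (n - k)) n"
  unfolding walk_def
proof (intro conjI allI impI)
  fix i assume w: "(\<forall>i\<le>n. w i \<in> V) \<and> (\<forall>i<n. adj (w i) (w (Suc i)))" and "i < n"
  then have "adj (w (n - Suc i)) (w (Suc (n - Suc i)))" by auto
  moreover have "Suc (n - Suc i) = n - i" using \<open>i < n\<close> by auto
  ultimately show "adj (w (n - i)) (w (n - Suc i))" using adj_sym by metis
qed auto

lemma edge_walk: "adj u v \<Longrightarrow> walk V adj (edge_walk u v) 1 \<and> non_backtracking (edge_walk u v) 1"
  using adj_in_V unfolding walk_def non_backtracking_def edge_walk_def by auto

lemma shortest_walk_non_backtracking:
  assumes "walk V adj w n" "w 0 = u" "w n = v" "n = tdist V adj u v"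
  shows "non_backtracking w n"
  unfolding non_backtracking_def
proof (intro allI impI notI)
  fix i assume i: "i + 2 \<le> n" and eq: "w i = w (i + 2)"
  define w' where "w' = (\<lambda>j. if j \<le> i then w j else w (j + 2))"
  have "walk V adj w' (n - 2)"
    using assms(1) i eq unfolding walk_def w'_def by (auto simp: not_le Suc_le_eq)
  moreover have "w' 0 = u" using assms unfolding w'_def by auto
  moreover have "w' (n - 2) = v"
  proof -
    have n: "n - 2 + 2 = n" using i by arith
    show ?thesis
    proof (cases "n - 2 \<le> i")
      case True
      then have "i = n - 2" using i by arith
      then show ?thesis using assms(3) eq n unfolding w'_def by simp
    next
      case False
      then show ?thesis using assms(3) n unfolding w'_def by simp
    qed
  qed
  ultimately have "tdist V adj u v \<le> n - 2"
    unfolding tdist_eq_Least_walk by (auto intro: Least_le)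
  then show False using assms(4) i by auto
qed

lemma non_backtracking_walks_last_step_eq:
  assumes "walk V adj w n" "non_backtracking w n" "walk V adj w' n'" "non_backtracking w' n'"
    and "w 0 = w' 0" "w n = w' n'" "0 < n" "0 < n'"
  shows "w (n - 1) = w' (n' - 1)"
proof (rule ccontr)
  assume "w (n - 1) \<noteq> w' (n' - 1)"
  \<comment> \<open>then the two walks glue to a closed non-backtracking walk, which must be trivial\<close>
  define c where "c = walk_append w n (\<lambda>k. w' (n' - k))"
  have "walk V adj c (n + n')"
    unfolding c_def using walk_append_walk[OF assms(1) walk_rev[OF assms(3)]] assms(6) by simp
  moreover have "non_backtracking c (n + n')"
    unfolding c_def using walk_append_non_backtracking[OF assms(2) non_backtracking_rev[OF assms(4)]]
      assms(6) \<open>w (n - 1) \<noteq> w' (n' - 1)\<close> by simp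
  moreover have "c 0 = c (n + n')"
    using walk_append_end[of "\<lambda>k. w' (n' - k)" w n n'] assms(5,6) unfolding c_def by simp
  ultimately have "n + n' = 0" by (rule closed_non_backtracking_walk)
  then show False using assms(7) by simp
qed

lemma non_backtracking_walk_unique:
  assumes "walk V adj w n" "non_backtracking w n" "walk V adj w' n'" "non_backtracking w' n'"
    and "w 0 = w' 0" "w n = w' n'"
  shows "n = n' \<and> (\<forall>i\<le>n. w i = w' i)"
  using assms
proof (induction "n + n'" arbitrary: n n' rule: less_induct)
  case less
  consider "n = 0" | "n' = 0" | a a' where "n = Suc a" "n' = Suc a'"
    by (cases n; cases n') auto
  then show ?case
  proof cases
    case 1
    then have "w' 0 = w' n'" using less.prems(5,6) by metis
    then have "n' = 0" by (rule closed_non_backtracking_walk[OF less.prems(3,4)])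
    then show ?thesis using 1 less.prems(5) by simp
  next
    case 2
    then have "w 0 = w n" using less.prems(5,6) by metis
    then have "n = 0" by (rule closed_non_backtracking_walk[OF less.prems(1,2)])
    then show ?thesis using 2 less.prems(5) by simp
  next
    case (3 a a')
    then have "w a = w' a'" using non_backtracking_walks_last_step_eq[OF less.prems] by simp
    have lt: "a + a' < n + n'" using 3 by simp
    have w: "walk V adj w a" "walk V adj w' a'"
      using walk_mono[OF less.prems(1)] walk_mono[OF less.prems(3)] 3 by simp_all
    have nb: "non_backtracking w a" "non_backtracking w' a'"
      using non_backtracking_mono[OF less.prems(2)] non_backtracking_mono[OF less.prems(4)] 3 by simp_all
    have "a = a' \<and> (\<forall>i\<le>a. w i = w' i)"
      by (rule less.hyps[OF lt w(1) nb(1) w(2) nb(2) less.prems(5) \<open>w a = w' a'\<close>])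
    then show ?thesis using 3 less.prems(6) by (auto simp: le_Suc_eq)
  qed
qed

lemma tdist_le_walk: "walk V adj w n \<Longrightarrow> tdist V adj (w 0) (w n) \<le> n"
  unfolding tdist_eq_Least_walk by (rule Least_le) blast

lemma geodesic_exists:
  assumes "u \<in> V" "v \<in> V"
  obtains w where "walk V adj w (tdist V adj u v)" "non_backtracking w (tdist V adj u v)"
    "w 0 = u" "w (tdist V adj u v) = v"
proof -
  have "\<exists>n w. walk V adj w n \<and> w 0 = u \<and> w n = v" using walk_exists[OF assms] by blast
  then have "\<exists>w. walk V adj w (tdist V adj u v) \<and> w 0 = u \<and> w (tdist V adj u v) = v"
    unfolding tdist_eq_Least_walk by (rule LeastI_ex)
  then obtain w where "walk V adj w (tdist V adj u v)" "w 0 = u" "w (tdist V adj u v) = v" by blast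
  then show ?thesis using that shortest_walk_non_backtracking by simp
qed

lemma tdist_non_backtracking:
  assumes "walk V adj w n" "non_backtracking w n"
  shows "tdist V adj (w 0) (w n) = n"
proof -
  have "w 0 \<in> V" "w n \<in> V" using assms(1) unfolding walk_def by auto
  then obtain w' where w': "walk V adj w' (tdist V adj (w 0) (w n))"
    "non_backtracking w' (tdist V adj (w 0) (w n))" "w' 0 = w 0" "w' (tdist V adj (w 0) (w n)) = w n"
    by (rule geodesic_exists)
  show ?thesis
    using non_backtracking_walk_unique[OF assms w'(1,2) w'(3)[symmetric] w'(4)[symmetric]] by argo
qed

lemma tdist_non_backtracking_sub:
  assumes "walk V adj w n" "non_backtracking w n" "i \<le> j" "j \<le> n"
  shows "tdist V adj (w i) (w j) = j - i"
proof -
  have "walk V adj (\<lambda>k. w (i + k)) (j - i)"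
    using walk_shift[OF walk_mono[OF assms(1,4)] assms(3)] .
  moreover have "non_backtracking (\<lambda>k. w (i + k)) (j - i)"
    using non_backtracking_shift[OF non_backtracking_mono[OF assms(2,4)]] .
  ultimately have "tdist V adj (w (i + 0)) (w (i + (j - i))) = j - i" by (rule tdist_non_backtracking)
  then show ?thesis using assms(3) by simp
qed

lemma non_backtracking_walk_eq:
  assumes "walk V adj w n" "non_backtracking w n" "walk V adj w' n'" "non_backtracking w' n'"
    and "w 0 = w' 0" "w n = w' n'" "i \<le> n"
  shows "w i = w' i"
  using non_backtracking_walk_unique[OF assms(1-6)] assms(7) by blast

lemma tdist_self: "u \<in> V \<Longrightarrow> tdist V adj u u = 0"
  using tdist_non_backtracking[of "\<lambda>_. u" 0] unfolding walk_def non_backtracking_def by simp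

lemma tdist_sym:
  assumes "u \<in> V" "v \<in> V"
  shows "tdist V adj u v = tdist V adj v u"
proof -
  obtain w where w: "walk V adj w (tdist V adj u v)" "non_backtracking w (tdist V adj u v)"
    "w 0 = u" "w (tdist V adj u v) = v"
    using assms by (rule geodesic_exists)
  show ?thesis
    using tdist_non_backtracking[OF walk_rev[OF w(1)] non_backtracking_rev[OF w(2)]] w(3,4) by simp
qed

lemma tdist_adj:
  assumes "adj u v"
  shows "tdist V adj u v = 1"
proof -
  have "tdist V adj (edge_walk u v 0) (edge_walk u v 1) = 1"
    using edge_walk[OF assms] tdist_non_backtracking by blast
  then show ?thesis unfolding edge_walk_def by simp
qed

lemma adj_if_tdist_1:
  assumes "u \<in> V" "v \<in> V" "tdist V adj u v = 1"
  shows "adj u v"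
proof -
  obtain w where "walk V adj w (tdist V adj u v)" "w 0 = u" "w (tdist V adj u v) = v"
    using assms(1,2) by (rule geodesic_exists)
  then show ?thesis using assms(3) unfolding walk_def by auto
qed

lemma tdist_triangle:
  assumes "u \<in> V" "v \<in> V" "x \<in> V"
  shows "tdist V adj u x \<le> tdist V adj u v + tdist V adj v x"
proof -
  obtain w where w: "walk V adj w (tdist V adj u v)" "w 0 = u" "w (tdist V adj u v) = v"
    using assms(1,2) by (rule geodesic_exists)
  obtain w' where w': "walk V adj w' (tdist V adj v x)" "w' 0 = v" "w' (tdist V adj v x) = x"
    using assms(2,3) by (rule geodesic_exists)
  have "walk V adj (walk_append w (tdist V adj u v) w') (tdist V adj u v + tdist V adj v x)"
    using walk_append_walk[OF w(1) w'(1)] w(3) w'(2) by simp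
  from tdist_le_walk[OF this] show ?thesis
    using walk_append_end[of w' w "tdist V adj u v" "tdist V adj v x"] w w' by simp
qed

lemma walk_append_edge:
  assumes "walk V adj w n" "non_backtracking w n" "adj (w n) x" "0 < n \<longrightarrow> w (n - 1) \<noteq> x"
  defines "w' \<equiv> walk_append w n (edge_walk (w n) x)"
  shows "walk V adj w' (Suc n)" "non_backtracking w' (Suc n)" "w' 0 = w 0" "w' (Suc n) = x"
    "\<And>i. i \<le> n \<Longrightarrow> w' i = w i"
proof -
  have e: "walk V adj (edge_walk (w n) x) 1" "non_backtracking (edge_walk (w n) x) 1"
    "edge_walk (w n) x 0 = w n" "edge_walk (w n) x 1 = x"
    using edge_walk[OF assms(3)] unfolding edge_walk_def by auto
  show "walk V adj w' (Suc n)" using walk_append_walk[OF assms(1) e(1)] e(3) unfolding w'_def by simp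
  show "non_backtracking w' (Suc n)"
    using walk_append_non_backtracking[OF assms(2) e(2)] e(3,4) assms(4) unfolding w'_def by simp
  show "w' 0 = w 0" "w' (Suc n) = x" "\<And>i. i \<le> n \<Longrightarrow> w' i = w i"
    using e(4) unfolding w'_def walk_append_def by auto
qed

lemma tdist_adj_cases:
  assumes "adj p q" "v \<in> V"
  shows "tdist V adj v q = tdist V adj v p + 1 \<or> tdist V adj v p = tdist V adj v q + 1"
proof -
  have "p \<in> V" using adj_in_V assms by auto
  define n where "n = tdist V adj v p"
  obtain w where w: "walk V adj w n" "non_backtracking w n" "w 0 = v" "w n = p"
    using assms(2) \<open>p \<in> V\<close> unfolding n_def by (rule geodesic_exists)
  show ?thesis
  proof (cases "0 < n \<and> w (n - 1) = q")
    case True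
    then have "tdist V adj (w 0) (w (n - 1)) = n - 1"
      using tdist_non_backtracking_sub[OF w(1,2), of 0 "n - 1"] by simp
    then show ?thesis using True w(3) unfolding n_def by auto
  next
    case False
    then have "0 < n \<longrightarrow> w (n - 1) \<noteq> q" by auto
    note e = walk_append_edge[OF w(1,2) _ this]
    have "tdist V adj v q = Suc n"
      using tdist_non_backtracking[OF e(1,2)] e(3,4) w(3,4) assms(1) by simp
    then show ?thesis unfolding n_def by simp
  qed
qed

lemma tdist_parent_unique:
  assumes "adj p q" "adj p r" "v \<in> V"
    and "tdist V adj v q + 1 = tdist V adj v p" "tdist V adj v r + 1 = tdist V adj v p"
  shows "q = r"
proof -
  have "q \<in> V" "r \<in> V" using adj_in_V assms by auto
  define m where "m = tdist V adj v q"
  have mr: "m = tdist V adj v r" using assms(4,5) unfolding m_def by simp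
  obtain w where w: "walk V adj w m" "non_backtracking w m" "w 0 = v" "w m = q"
    using assms(3) \<open>q \<in> V\<close> unfolding m_def by (rule geodesic_exists)
  obtain w' where w': "walk V adj w' m" "non_backtracking w' m" "w' 0 = v" "w' m = r"
    using assms(3) \<open>r \<in> V\<close> unfolding mr by (rule geodesic_exists)
  have not_p: "0 < m \<longrightarrow> u (m - 1) \<noteq> p" if "walk V adj u m" "non_backtracking u m" "u 0 = v" for u
    using tdist_non_backtracking_sub[OF that(1,2), of 0 "m - 1"] that(3) assms(4) unfolding m_def by auto
  have "adj (w m) p" "adj (w' m) p" using w(4) w'(4) assms(1,2) adj_sym by auto
  note e = walk_append_edge[OF w(1,2) this(1) not_p[OF w(1-3)]]
  note e' = walk_append_edge[OF w'(1,2) \<open>adj (w' m) p\<close> not_p[OF w'(1-3)]]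
  show ?thesis
    using non_backtracking_walk_eq[OF e(1,2) e'(1,2), of m] e(3,4,5) e'(3,4,5) w w' by simp
qed

end

section \<open>Rays and ends\<close>

lemma cofinal_refl: "cofinal r r"
  unfolding cofinal_def by (metis add_0_right)

lemma cofinal_sym: "cofinal r s \<Longrightarrow> cofinal s r"
  unfolding cofinal_def by metis

lemma cofinal_trans:
  assumes "cofinal r s" "cofinal s t"
  shows "cofinal r t"
proof -
  obtain k m where km: "\<forall>i. r (i + k) = s (i + m)" using assms(1) unfolding cofinal_def by blast
  obtain k' m' where km': "\<forall>i. s (i + k') = t (i + m')" using assms(2) unfolding cofinal_def by blast
  have "r (i + (k + k')) = t (i + (m + m'))" for i
    using km[rule_format, of "i + k'"] km'[rule_format, of "i + m"] by (simp add: ac_simps)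
  then show ?thesis unfolding cofinal_def by blast
qed

lemma cofinal_comp: "cofinal r s \<Longrightarrow> cofinal (f \<circ> r) (f \<circ> s)"
  unfolding cofinal_def by (metis comp_apply)

lemma cofinal_shift: "cofinal r (\<lambda>i. r (i + k))"
  unfolding cofinal_def by (rule exI[of _ k], rule exI[of _ 0]) simp

definition ray_end :: "'v set \<Rightarrow> ('v \<Rightarrow> 'v \<Rightarrow> bool) \<Rightarrow> (nat \<Rightarrow> 'v) \<Rightarrow> (nat \<Rightarrow> 'v) set" where
  "ray_end V adj r = {s \<in> rays V adj. cofinal r s}"

lemma ray_end_in_boundary: "is_ray V adj r \<Longrightarrow> ray_end V adj r \<in> boundary V adj"
  unfolding boundary_def ray_end_def quotient_def rays_def by auto

lemma boundary_eq_ray_end: "c \<in> boundary V adj \<Longrightarrow> r \<in> c \<Longrightarrow> c = ray_end V adj r"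
  unfolding boundary_def ray_end_def quotient_def rays_def by (auto intro: cofinal_trans cofinal_sym)

lemma is_ray_if_in_boundary: "c \<in> boundary V adj \<Longrightarrow> r \<in> c \<Longrightarrow> is_ray V adj r"
  unfolding boundary_def quotient_def rays_def by auto

lemma mem_ray_end: "is_ray V adj s \<Longrightarrow> cofinal r s \<Longrightarrow> s \<in> ray_end V adj r"
  unfolding ray_end_def rays_def by auto

lemma ray_end_cong: "cofinal r s \<Longrightarrow> ray_end V adj r = ray_end V adj s"
  unfolding ray_end_def by (auto intro: cofinal_trans cofinal_sym)

context tree
begin

lemma is_ray_iff:
  "is_ray V adj r \<longleftrightarrow> (\<forall>i. r i \<in> V) \<and> (\<forall>i. adj (r i) (r (Suc i))) \<and> (\<forall>i. r i \<noteq> r (i + 2))"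
proof
  assume r: "is_ray V adj r"
  then have V: "\<forall>i. r i \<in> V" and d: "\<And>i n. tdist V adj (r i) (r (i + n)) = n"
    unfolding is_ray_def by auto
  have "\<forall>i. adj (r i) (r (Suc i))" using adj_if_tdist_1 V d[of _ 1] by simp
  moreover have "r i \<noteq> r (i + 2)" for i
    using d[of i 2] tdist_self V by force
  ultimately show "(\<forall>i. r i \<in> V) \<and> (\<forall>i. adj (r i) (r (Suc i))) \<and> (\<forall>i. r i \<noteq> r (i + 2))"
    using V by blast
next
  assume r: "(\<forall>i. r i \<in> V) \<and> (\<forall>i. adj (r i) (r (Suc i))) \<and> (\<forall>i. r i \<noteq> r (i + 2))"
  have "tdist V adj (r i) (r (i + n)) = n" for i n
  proof -
    have "walk V adj (\<lambda>k. r (i + k)) n" using r unfolding walk_def by auto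
    moreover have "non_backtracking (\<lambda>k. r (i + k)) n"
      using r unfolding non_backtracking_def by (auto simp: add.assoc)
    ultimately show ?thesis using tdist_non_backtracking by fastforce
  qed
  then show "is_ray V adj r" using r unfolding is_ray_def by blast
qed

lemma ray_in_V: "is_ray V adj r \<Longrightarrow> r i \<in> V"
  unfolding is_ray_def by auto

lemma ray_adj: "is_ray V adj r \<Longrightarrow> adj (r i) (r (Suc i))"
  unfolding is_ray_iff by auto

lemma ray_tdist: "is_ray V adj r \<Longrightarrow> tdist V adj (r i) (r (i + n)) = n"
  unfolding is_ray_def by auto

lemma ray_shift: "is_ray V adj r \<Longrightarrow> is_ray V adj (\<lambda>i. r (i + k))"
  unfolding is_ray_iff by (auto simp: ac_simps)

lemma ray_walk: "is_ray V adj r \<Longrightarrow> walk V adj r n"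
  unfolding is_ray_iff walk_def by auto

lemma ray_non_backtracking: "is_ray V adj r \<Longrightarrow> non_backtracking r n"
  unfolding is_ray_iff non_backtracking_def by auto

lemma aut_in_V: "is_automorphism V adj f \<Longrightarrow> v \<in> V \<Longrightarrow> f v \<in> V"
  unfolding is_automorphism_def bij_betw_def by auto

lemma aut_inj: "is_automorphism V adj f \<Longrightarrow> u \<in> V \<Longrightarrow> v \<in> V \<Longrightarrow> f u = f v \<Longrightarrow> u = v"
  unfolding is_automorphism_def bij_betw_def inj_on_def by auto

lemma aut_adj: "is_automorphism V adj f \<Longrightarrow> adj u v \<Longrightarrow> adj (f u) (f v)"
  using adj_in_V unfolding is_automorphism_def by blast

lemma aut_surj: "is_automorphism V adj f \<Longrightarrow> v \<in> V \<Longrightarrow> \<exists>u\<in>V. f u = v"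
  unfolding is_automorphism_def bij_betw_def by (metis imageE)

lemma aut_adj_iff: "is_automorphism V adj f \<Longrightarrow> u \<in> V \<Longrightarrow> v \<in> V \<Longrightarrow> adj (f u) (f v) \<longleftrightarrow> adj u v"
  unfolding is_automorphism_def by blast

lemma aut_walk: "is_automorphism V adj f \<Longrightarrow> walk V adj w n \<Longrightarrow> walk V adj (f \<circ> w) n"
  unfolding walk_def using aut_in_V aut_adj by auto

lemma aut_non_backtracking:
  "is_automorphism V adj f \<Longrightarrow> walk V adj w n \<Longrightarrow> non_backtracking w n \<Longrightarrow> non_backtracking (f \<circ> w) n"
  unfolding non_backtracking_def walk_def using aut_inj by fastforce

lemma aut_tdist:
  assumes "is_automorphism V adj f" "u \<in> V" "v \<in> V"
  shows "tdist V adj (f u) (f v) = tdist V adj u v"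
proof -
  obtain w where w: "walk V adj w (tdist V adj u v)" "non_backtracking w (tdist V adj u v)"
    "w 0 = u" "w (tdist V adj u v) = v"
    using assms(2,3) by (rule geodesic_exists)
  show ?thesis
    using tdist_non_backtracking[OF aut_walk[OF assms(1) w(1)] aut_non_backtracking[OF assms(1) w(1,2)]] w(3,4)
    by simp
qed

lemma aut_ray: "is_automorphism V adj f \<Longrightarrow> is_ray V adj r \<Longrightarrow> is_ray V adj (f \<circ> r)"
  unfolding is_ray_def using aut_tdist aut_in_V by auto

lemma aut_inv_into: "is_automorphism V adj f \<Longrightarrow> is_automorphism V adj (inv_into V f)"
  unfolding is_automorphism_def
  by (smt (verit, ccfv_threshold) bij_betwE bij_betw_inv_into bij_betw_inv_into_right)

lemma aut_inv_into_comp: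
  assumes "is_automorphism V adj f" "is_ray V adj r"
  shows "f \<circ> (inv_into V f \<circ> r) = r" "inv_into V f \<circ> (f \<circ> r) = r"
  using assms ray_in_V unfolding is_automorphism_def bij_betw_def
  by (auto simp: f_inv_into_f inv_into_f_f)

lemma fixes_ray_end_iff:
  assumes f: "is_automorphism V adj f" and r: "is_ray V adj r"
  shows "(\<lambda>s. f \<circ> s) ` ray_end V adj r = ray_end V adj r \<longleftrightarrow> cofinal r (f \<circ> r)"
proof
  assume "(\<lambda>s. f \<circ> s) ` ray_end V adj r = ray_end V adj r"
  moreover have "r \<in> ray_end V adj r" using r by (simp add: mem_ray_end cofinal_refl)
  ultimately have "f \<circ> r \<in> ray_end V adj r" by blast
  then show "cofinal r (f \<circ> r)" unfolding ray_end_def by auto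
next
  assume c: "cofinal r (f \<circ> r)"
  show "(\<lambda>s. f \<circ> s) ` ray_end V adj r = ray_end V adj r"
  proof (intro equalityI subsetI)
    fix x assume "x \<in> (\<lambda>s. f \<circ> s) ` ray_end V adj r"
    then obtain s where s: "is_ray V adj s" "cofinal r s" "x = f \<circ> s"
      unfolding ray_end_def rays_def by blast
    then show "x \<in> ray_end V adj r"
      using aut_ray[OF f s(1)] cofinal_trans[OF c cofinal_comp[OF s(2)]] by (simp add: mem_ray_end)
  next
    fix s assume "s \<in> ray_end V adj r"
    then have s: "is_ray V adj s" "cofinal r s" unfolding ray_end_def rays_def by auto
    have "cofinal (inv_into V f \<circ> (f \<circ> r)) (inv_into V f \<circ> s)"
      using cofinal_comp[OF cofinal_trans[OF cofinal_sym[OF c] s(2)]] .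
    then have "inv_into V f \<circ> s \<in> ray_end V adj r"
      using aut_ray[OF aut_inv_into[OF f] s(1)] aut_inv_into_comp[OF f r] by (simp add: mem_ray_end)
    then show "s \<in> (\<lambda>s. f \<circ> s) ` ray_end V adj r"
      using aut_inv_into_comp(1)[OF f s(1)] by (metis image_eqI)
  qed
qed

lemma walk_append_ray:
  assumes "walk V adj w n" "non_backtracking w n" "is_ray V adj r" "w n = r 0"
    and "0 < n \<longrightarrow> w (n - 1) \<noteq> r 1"
  shows "is_ray V adj (walk_append w n r)"
  unfolding is_ray_iff
proof (intro conjI allI)
  fix i
  have W: "walk V adj (walk_append w n r) (n + Suc (Suc i))"
    using walk_append_walk[OF assms(1) ray_walk[OF assms(3)] assms(4)] .
  have "0 < n \<and> 0 < Suc (Suc i) \<longrightarrow> w (n - 1) \<noteq> r 1" using assms(5) by simp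
  then have N: "non_backtracking (walk_append w n r) (n + Suc (Suc i))"
    by (rule walk_append_non_backtracking[OF assms(2) ray_non_backtracking[OF assms(3)] assms(4)])
  show "walk_append w n r i \<in> V" "adj (walk_append w n r i) (walk_append w n r (Suc i))"
    using W unfolding walk_def by auto
  show "walk_append w n r i \<noteq> walk_append w n r (i + 2)"
    using N unfolding non_backtracking_def by auto
qed

lemma cofinal_walk_append: "cofinal (walk_append w n r) r"
  unfolding cofinal_def walk_append_def by (rule exI[of _ "Suc n"], rule exI[of _ 1]) auto

lemma opposite_rays_walk:
  fixes i j :: nat
  assumes r: "is_ray V adj r" and s: "is_ray V adj s" and rs: "r 0 = s 0" "r 1 \<noteq> s 1"
  defines "w \<equiv> walk_append (\<lambda>k. s (j - k)) j r"
  shows "walk V adj w (j + i)" "non_backtracking w (j + i)" "w 0 = s j" "w (j + i) = r i" "w j = s 0"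
proof -
  show "walk V adj w (j + i)"
    using walk_append_walk[OF walk_rev[OF ray_walk[OF s]] ray_walk[OF r]] rs(1) unfolding w_def by simp
  show "non_backtracking w (j + i)"
    using walk_append_non_backtracking[OF non_backtracking_rev[OF ray_non_backtracking[OF s]]
        ray_non_backtracking[OF r]] rs unfolding w_def by auto
  show "w 0 = s j" "w (j + i) = r i" "w j = s 0"
    using rs(1) walk_append_end[of r "\<lambda>k. s (j - k)" j i] unfolding w_def walk_append_def by auto
qed

lemma tdist_opposite_rays:
  assumes "is_ray V adj r" "is_ray V adj s" "r 0 = s 0" "r 1 \<noteq> s 1"
  shows "tdist V adj (s j) (r i) = j + i"
  using tdist_non_backtracking opposite_rays_walk[OF assms] by metis

lemma ray_eq_if_cofinal:
  assumes r: "is_ray V adj r" and s: "is_ray V adj s" and "r 0 = s 0" "cofinal r s"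
  shows "r = s"
proof
  obtain k m where km: "\<forall>i. r (i + k) = s (i + m)" using assms(4) unfolding cofinal_def by blast
  then have "k = m" using ray_tdist[OF r, of 0 k] ray_tdist[OF s, of 0 m] assms(3) by (metis add_0)
  fix i
  show "r i = s i"
  proof (cases "i \<le> k")
    case True
    show ?thesis
      by (rule non_backtracking_walk_eq[OF ray_walk[OF r] ray_non_backtracking[OF r]
            ray_walk[OF s] ray_non_backtracking[OF s] assms(3)])
        (use km[rule_format, of 0] \<open>k = m\<close> True in simp_all)
  next
    case False
    then show ?thesis using km[rule_format, of "i - k"] \<open>k = m\<close> by simp
  qed
qed

lemma ray_fixed_if_start_fixed:
  assumes "is_automorphism V adj f" "is_ray V adj r" "f (r 0) = r 0" "cofinal r (f \<circ> r)"
  shows "f \<circ> r = r"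
  using ray_eq_if_cofinal[OF assms(2) aut_ray[OF assms(1,2)]] assms(3,4) by simp

lemma aut_fixes_geodesic:
  assumes f: "is_automorphism V adj f" and w: "walk V adj w n" "non_backtracking w n"
    and "f (w 0) = w 0" "f (w n) = w n" "i \<le> n"
  shows "f (w i) = w i"
  using non_backtracking_walk_eq[OF aut_walk[OF f w(1)] aut_non_backtracking[OF f w] w] assms(4-6)
  by simp

end

definition leafless :: "'v set \<Rightarrow> ('v \<Rightarrow> 'v \<Rightarrow> bool) \<Rightarrow> bool" where
  "leafless V adj \<longleftrightarrow> (\<forall>v\<in>V. \<exists>x y. adj v x \<and> adj v y \<and> x \<noteq> y)"

text \<open>A ray starting with the edge \<open>(y, x)\<close>, prolonged step by step to some neighbour other than
  the vertex just left; this is a ray as soon as no vertex is a leaf.\<close>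

definition extension_step :: "('v \<Rightarrow> 'v \<Rightarrow> bool) \<Rightarrow> 'v \<times> 'v \<Rightarrow> 'v \<times> 'v" where
  "extension_step adj p = (snd p, SOME z. adj (snd p) z \<and> z \<noteq> fst p)"

definition extension_ray :: "('v \<Rightarrow> 'v \<Rightarrow> bool) \<Rightarrow> 'v \<Rightarrow> 'v \<Rightarrow> nat \<Rightarrow> 'v" where
  "extension_ray adj y x = (\<lambda>i. fst ((extension_step adj ^^ i) (y, x)))"

context tree
begin

lemma leafless_other_neighbour: "leafless V adj \<Longrightarrow> adj v q \<Longrightarrow> \<exists>z. adj v z \<and> z \<noteq> q"
  unfolding leafless_def using adj_in_V by metis

lemma extension_ray:
  assumes "leafless V adj" "adj y x"
  shows "is_ray V adj (extension_ray adj y x)" "extension_ray adj y x 0 = y" "extension_ray adj y x 1 = x"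
proof -
  define P where "P = (\<lambda>i. (extension_step adj ^^ i) (y, x))"
  have P_Suc: "P (Suc i) = extension_step adj (P i)" for i unfolding P_def by simp
  have next_vertex: "adj (snd (P i)) z \<and> z \<noteq> fst (P i)"
    if "adj (fst (P i)) (snd (P i))" "z = snd (P (Suc i))" for i z
    using someI_ex[OF leafless_other_neighbour[OF assms(1) adj_sym[OF that(1)]]] that(2)
    unfolding P_Suc extension_step_def by simp
  have edge: "adj (fst (P i)) (snd (P i))" for i
    by (induction i) (use assms(2) next_vertex in \<open>auto simp: P_def P_Suc extension_step_def\<close>)
  have e: "extension_ray adj y x i = fst (P i)" for i unfolding extension_ray_def P_def by simp
  have fst_Suc: "fst (P (Suc i)) = snd (P i)" for i unfolding P_Suc extension_step_def by simp
  have "fst (P i) \<noteq> fst (P (i + 2))" for i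
    using next_vertex[OF edge refl, of i] fst_Suc[of "Suc i"] by (simp add: eq_commute)
  then show "is_ray V adj (extension_ray adj y x)"
    unfolding is_ray_iff e using edge adj_in_V fst_Suc by auto
  show "extension_ray adj y x 0 = y" "extension_ray adj y x 1 = x"
    using e fst_Suc[of 0] unfolding P_def by auto
qed

section \<open>Half-trees and automorphisms fixing their ends\<close>

lemma mem_Z0_iff: "v \<in> Z0 V adj (a, b) \<longleftrightarrow> v \<in> V \<and> tdist V adj v b < tdist V adj v a"
  unfolding Z0_def by auto

lemma tdist_Z0:
  assumes "adj a b" "v \<in> Z0 V adj (a, b)"
  shows "tdist V adj v a = tdist V adj v b + 1"
  using tdist_adj_cases[OF adj_sym[OF assms(1)], of v] assms(2) unfolding mem_Z0_iff by auto

lemma aut_Z0_iff: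
  assumes "is_automorphism V adj f" "v \<in> V" "a \<in> V" "b \<in> V"
  shows "f v \<in> Z0 V adj (f a, f b) \<longleftrightarrow> v \<in> Z0 V adj (a, b)"
  using assms aut_in_V aut_tdist unfolding mem_Z0_iff by simp

lemma geodesic_into_Z0:
  assumes ab: "adj a b" and c: "c \<in> Z0 V adj (a, b)"
    and w: "walk V adj w n" "non_backtracking w n" "w 0 = a" "w n = c"
  shows "0 < n" "w 1 = b" "\<And>i. 1 \<le> i \<Longrightarrow> i \<le> n \<Longrightarrow> w i \<in> Z0 V adj (a, b) \<and> tdist V adj a (w i) = i"
proof -
  have cV: "c \<in> V" and aV: "a \<in> V" "b \<in> V" using c adj_in_V ab unfolding mem_Z0_iff by auto
  have ca: "tdist V adj c a = tdist V adj c b + 1" using tdist_Z0[OF ab c] .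
  have n: "tdist V adj c a = n"
    using tdist_non_backtracking[OF w(1,2)] w(3,4) tdist_sym[OF aV(1) cV] by simp
  then show "0 < n" using ca by simp
  have w1: "tdist V adj (w 1) (w n) = n - 1"
    using tdist_non_backtracking_sub[OF w(1,2), of 1 n] \<open>0 < n\<close> by simp
  have "w 1 \<in> V" "adj a (w 1)" using w(1,3) \<open>0 < n\<close> unfolding walk_def by auto
  then have "tdist V adj c (w 1) + 1 = tdist V adj c a"
    using w1 n w(4) tdist_sym[OF \<open>w 1 \<in> V\<close> cV] \<open>0 < n\<close> by simp
  then show b: "w 1 = b" using tdist_parent_unique[OF \<open>adj a (w 1)\<close> ab cV] ca by simp
  fix i assume i: "1 \<le> i" "i \<le> n"
  have wi: "w i \<in> V" using w(1) i unfolding walk_def by auto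
  have "tdist V adj a (w i) = i" "tdist V adj b (w i) = i - 1"
    using tdist_non_backtracking_sub[OF w(1,2), of 0 i] tdist_non_backtracking_sub[OF w(1,2), of 1 i]
      i w(3) b by auto
  then show "w i \<in> Z0 V adj (a, b) \<and> tdist V adj a (w i) = i"
    unfolding mem_Z0_iff using tdist_sym[OF aV(1) wi] tdist_sym[OF aV(2) wi] wi i by simp
qed

lemma ray_end_in_ZB_if_starts:
  assumes "is_ray V adj r" "r 0 = a" "r 1 = b"
  shows "ray_end V adj r \<in> ZB V adj (a, b)"
proof -
  have "\<exists>\<rho>\<in>ray_end V adj r. \<exists>j. \<rho> j = a \<and> \<rho> (Suc j) = b"
    using mem_ray_end[OF assms(1) cofinal_refl] assms(2,3) by (intro bexI[of _ r] exI[of _ 0]) auto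
  then show ?thesis unfolding ZB_def using ray_end_in_boundary[OF assms(1)] by simp
qed

lemma ray_end_in_ZB:
  assumes ab: "adj a b" and c: "c \<in> Z0 V adj (a, b)" and r: "is_ray V adj r" "r 0 = c"
    and away: "tdist V adj a (r 1) = tdist V adj a c + 1"
  shows "ray_end V adj r \<in> ZB V adj (a, b)"
proof -
  have "c \<in> V" "a \<in> V" using c adj_in_V ab unfolding mem_Z0_iff by auto
  define n where "n = tdist V adj a c"
  obtain w where w: "walk V adj w n" "non_backtracking w n" "w 0 = a" "w n = c"
    using \<open>a \<in> V\<close> \<open>c \<in> V\<close> unfolding n_def by (rule geodesic_exists)
  note b = geodesic_into_Z0(1,2)[OF ab c w]
  have "w (n - 1) \<noteq> r 1"
    using tdist_non_backtracking_sub[OF w(1,2), of 0 "n - 1"] away w(3) unfolding n_def by auto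
  then have s: "is_ray V adj (walk_append w n r)" using walk_append_ray[OF w(1,2) r(1)] w(4) r(2) by simp
  have "walk_append w n r 0 = a" "walk_append w n r 1 = b"
    using w(3) b unfolding walk_append_def by auto
  then have "ray_end V adj (walk_append w n r) \<in> ZB V adj (a, b)"
    by (rule ray_end_in_ZB_if_starts[OF s])
  then show ?thesis using ray_end_cong[OF cofinal_walk_append] by metis
qed

lemma ray_end_in_ZB_beyond:
  assumes ab: "adj a b" and c: "c \<in> Z0 V adj (a, b)"
    and w: "walk V adj w p" "non_backtracking w p" "w 0 = c" "0 < p"
    and away: "tdist V adj a (w 1) = tdist V adj a c + 1"
    and r: "is_ray V adj r" "r 0 = w p" "r 1 \<noteq> w (p - 1)"
  shows "ray_end V adj r \<in> ZB V adj (a, b)"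
proof -
  have "is_ray V adj (walk_append w p r)" using walk_append_ray[OF w(1,2) r(1)] r(2,3) by simp
  moreover have "walk_append w p r 0 = c" "walk_append w p r 1 = w 1"
    using w(3,4) unfolding walk_append_def by auto
  ultimately have "ray_end V adj (walk_append w p r) \<in> ZB V adj (a, b)"
    using ray_end_in_ZB[OF ab c] away by simp
  then show ?thesis using ray_end_cong[OF cofinal_walk_append[of w p r]] by simp
qed

lemma cofinal_aut_if_fixes_ZB:
  assumes "is_automorphism V adj f" "\<forall>x \<in> ZB V adj (a, b). (\<lambda>s. f \<circ> s) ` x = x"
    and "is_ray V adj r" "ray_end V adj r \<in> ZB V adj (a, b)"
  shows "cofinal r (f \<circ> r)"
  using fixes_ray_end_iff[OF assms(1,3)] assms(2,4) by blast

lemma cofinal_aut_shift_balance: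
  assumes f: "is_automorphism V adj f" and r: "is_ray V adj r" and s: "is_ray V adj s"
    and rs: "r 0 = s 0" "r 1 \<noteq> s 1"
    and "\<forall>i. r (i + k) = f (r (i + m))" "\<forall>i. s (i + k') = f (s (i + m'))"
  shows "k + k' = m + m'"
proof -
  have "k' + k = tdist V adj (s k') (r k)" using tdist_opposite_rays[OF r s rs] by simp
  also have "\<dots> = tdist V adj (f (s m')) (f (r m))"
    using assms(6)[rule_format, of 0] assms(7)[rule_format, of 0] by simp
  also have "\<dots> = tdist V adj (s m') (r m)" using aut_tdist[OF f ray_in_V[OF s] ray_in_V[OF r]] .
  also have "\<dots> = m' + m" using tdist_opposite_rays[OF r s rs] by simp
  finally show ?thesis by simp
qed

text \<open>An automorphism fixing the ends of three rays that leave a vertex in different directions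
  fixes that vertex: the three balance equations force every ray to be fixed from some point on,
  and the geodesic between two fixed points passes through the vertex.\<close>

lemma fixes_tripod_centre:
  assumes f: "is_automorphism V adj f"
    and r: "is_ray V adj r1" "is_ray V adj r2" "is_ray V adj r3"
    and start: "r1 0 = v" "r2 0 = v" "r3 0 = v"
    and diverge: "r1 1 \<noteq> r2 1" "r1 1 \<noteq> r3 1" "r2 1 \<noteq> r3 1"
    and fixed_ends: "cofinal r1 (f \<circ> r1)" "cofinal r2 (f \<circ> r2)" "cofinal r3 (f \<circ> r3)"
  shows "f v = v"
proof -
  obtain k1 m1 where d1: "\<forall>i. r1 (i + k1) = f (r1 (i + m1))"
    using fixed_ends(1) unfolding cofinal_def by auto
  obtain k2 m2 where d2: "\<forall>i. r2 (i + k2) = f (r2 (i + m2))"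
    using fixed_ends(2) unfolding cofinal_def by auto
  obtain k3 m3 where d3: "\<forall>i. r3 (i + k3) = f (r3 (i + m3))"
    using fixed_ends(3) unfolding cofinal_def by auto
  have "k1 + k2 = m1 + m2" "k1 + k3 = m1 + m3" "k2 + k3 = m2 + m3"
    using cofinal_aut_shift_balance[OF f r(1,2) _ diverge(1) d1 d2]
      cofinal_aut_shift_balance[OF f r(1,3) _ diverge(2) d1 d3]
      cofinal_aut_shift_balance[OF f r(2,3) _ diverge(3) d2 d3] start by auto
  then have "k1 = m1" "k2 = m2" by arith+
  then have "f (r1 k1) = r1 k1" "f (r2 k2) = r2 k2"
    using d1[rule_format, of 0] d2[rule_format, of 0] by simp_all
  moreover have rs: "r1 0 = r2 0" "r1 1 \<noteq> r2 1" using start diverge(1) by simp_all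
  note L = opposite_rays_walk[OF r(1,2) rs]
  ultimately show ?thesis
    using aut_fixes_geodesic[OF f L(1,2)[where i = k1 and j = k2], of k2]
      L(3)[where j = k2] L(4)[where i = k1 and j = k2] L(5)[where j = k2] start(2) by simp
qed

lemma fixes_parent:
  assumes leafless: "leafless V adj" and ab: "adj a b"
    and f: "is_automorphism V adj f" and F: "\<forall>x \<in> ZB V adj (a, b). (\<lambda>s. f \<circ> s) ` x = x"
    and w: "w \<in> Z0 V adj (a, b)" "f w = w" and p: "adj w p" "tdist V adj a p + 1 = tdist V adj a w"
  shows "f p = p"
proof -
  have "a \<in> V" "p \<in> V" using adj_in_V ab p by auto
  have fp: "adj w (f p)" using aut_adj[OF f p(1)] w(2) by simp
  consider "tdist V adj a (f p) = tdist V adj a w + 1" | "tdist V adj a w = tdist V adj a (f p) + 1"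
    using tdist_adj_cases[OF fp \<open>a \<in> V\<close>] by blast
  then show ?thesis
  proof cases
    case 1
    \<comment> \<open>then the ray from \<open>w\<close> through \<open>f p\<close> ends in \<open>ZB(a,b)\<close>, so \<open>f\<close> fixes it pointwise\<close>
    define r where "r = extension_ray adj w (f p)"
    have r: "is_ray V adj r" "r 0 = w" "r 1 = f p" using extension_ray[OF leafless fp] unfolding r_def by auto
    have "ray_end V adj r \<in> ZB V adj (a, b)" using ray_end_in_ZB[OF ab w(1) r(1,2)] 1 r(3) by simp
    then have "f \<circ> r = r"
      using ray_fixed_if_start_fixed[OF f r(1)] cofinal_aut_if_fixes_ZB[OF f F r(1)] r(2) w(2) by simp
    then have "f (f p) = f p" using r(3) by (metis comp_apply)
    then show ?thesis using aut_inj[OF f aut_in_V[OF f \<open>p \<in> V\<close>] \<open>p \<in> V\<close>] by simp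
  next
    case 2
    then show ?thesis using tdist_parent_unique[OF fp p(1) \<open>a \<in> V\<close>] p(2) by simp
  qed
qed

lemma fixes_b_if_fixes_vertex:
  assumes leafless: "leafless V adj" and ab: "adj a b"
    and f: "is_automorphism V adj f" and F: "\<forall>x \<in> ZB V adj (a, b). (\<lambda>s. f \<circ> s) ` x = x"
    and c: "c \<in> Z0 V adj (a, b)" "f c = c"
  shows "f b = b"
proof -
  have "a \<in> V" "c \<in> V" using c adj_in_V ab unfolding mem_Z0_iff by auto
  define n where "n = tdist V adj a c"
  obtain w where w: "walk V adj w n" "non_backtracking w n" "w 0 = a" "w n = c"
    using \<open>a \<in> V\<close> \<open>c \<in> V\<close> unfolding n_def by (rule geodesic_exists)
  note geo = geodesic_into_Z0[OF ab c(1) w]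
  have "f (w (n - k)) = w (n - k)" if "k < n" for k
    using that
  proof (induction k)
    case 0
    then show ?case using w(4) c(2) by simp
  next
    case (Suc k)
    have "adj (w (n - Suc k)) (w (Suc (n - Suc k)))" using w(1) Suc.prems unfolding walk_def by auto
    moreover have "Suc (n - Suc k) = n - k" using Suc.prems by arith
    ultimately have "adj (w (n - k)) (w (n - Suc k))" using adj_sym by simp
    moreover have "tdist V adj a (w (n - Suc k)) + 1 = tdist V adj a (w (n - k))"
      using tdist_non_backtracking_sub[OF w(1,2), of 0 "n - Suc k"] geo(3)[of "n - k"] w(3) Suc.prems
      by simp
    moreover have "w (n - k) \<in> Z0 V adj (a, b)" using geo(3)[of "n - k"] Suc.prems by simp
    moreover have "f (w (n - k)) = w (n - k)" using Suc by simp
    ultimately show ?case using fixes_parent[OF leafless ab f F] by blast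
  qed
  from this[of "n - 1"] show ?thesis using geo(1,2) by simp
qed

lemma fixes_Z0_if_fixes_b:
  assumes leafless: "leafless V adj" and ab: "adj a b"
    and f: "is_automorphism V adj f" and F: "\<forall>x \<in> ZB V adj (a, b). (\<lambda>s. f \<circ> s) ` x = x"
    and fb: "f b = b" and v: "v \<in> Z0 V adj (a, b)"
  shows "f v = v"
proof -
  have "a \<in> V" "v \<in> V" using v adj_in_V ab unfolding mem_Z0_iff by auto
  define n where "n = tdist V adj a v"
  obtain w where w: "walk V adj w n" "non_backtracking w n" "w 0 = a" "w n = v"
    using \<open>a \<in> V\<close> \<open>v \<in> V\<close> unfolding n_def by (rule geodesic_exists)
  note b = geodesic_into_Z0(1,2)[OF ab v w]
  \<comment> \<open>continue the geodesic from \<open>a\<close> through \<open>b\<close> to \<open>v\<close> to a ray; from \<open>b\<close> on it is fixed\<close>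
  have "n - 1 < n" using b(1) by simp
  then have "adj (w (n - 1)) (w (Suc (n - 1)))" using w(1) unfolding walk_def by blast
  then have "adj v (w (n - 1))" using w(4) b(1) adj_sym by simp
  then obtain z where z: "adj v z" "z \<noteq> w (n - 1)" using leafless_other_neighbour[OF leafless] by blast
  note e = extension_ray[OF leafless z(1)]
  define s where "s = walk_append w n (extension_ray adj v z)"
  have s: "is_ray V adj s" unfolding s_def by (rule walk_append_ray[OF w(1,2) e(1)]) (use w(4) e z in simp_all)
  have "s 0 = a" "s 1 = b" using w(3) b unfolding s_def walk_append_def by auto
  then have "ray_end V adj s \<in> ZB V adj (a, b)" by (rule ray_end_in_ZB_if_starts[OF s])
  moreover have "ray_end V adj s = ray_end V adj (\<lambda>i. s (i + 1))" by (rule ray_end_cong[OF cofinal_shift])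
  ultimately have "f \<circ> (\<lambda>i. s (i + 1)) = (\<lambda>i. s (i + 1))"
    using ray_fixed_if_start_fixed[OF f ray_shift[OF s, of 1]] cofinal_aut_if_fixes_ZB[OF f F ray_shift[OF s, of 1]]
      \<open>s 1 = b\<close> fb by simp
  from fun_cong[OF this, of "n - 1"] have "f (s n) = s n" using b(1) by simp
  then show ?thesis using w(4) unfolding s_def walk_append_def by simp
qed

lemma fixes_ZB_if_fixes_Z0:
  assumes ab: "adj a b" and f: "is_automorphism V adj f" and F: "\<forall>v\<in>Z0 V adj (a, b). f v = v"
    and c: "c \<in> ZB V adj (a, b)"
  shows "(\<lambda>s. f \<circ> s) ` c = c"
proof -
  obtain r j where r: "r \<in> c" "r j = a" "r (Suc j) = b" and "c \<in> boundary V adj"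
    using c unfolding ZB_def by auto
  then have "is_ray V adj r" "c = ray_end V adj r"
    using is_ray_if_in_boundary boundary_eq_ray_end by blast+
  note ray = \<open>is_ray V adj r\<close>
  have "\<forall>i. r (i + Suc j) = f (r (i + Suc j))"
  proof
    fix i
    have x: "r (i + Suc j) \<in> V" using ray_in_V[OF ray] .
    have "tdist V adj (r (i + Suc j)) a = Suc i"
      using ray_tdist[OF ray, of j "Suc i"] r(2) tdist_sym[OF _ x, of a] adj_in_V[OF ab] by (simp add: ac_simps)
    moreover have "tdist V adj (r (i + Suc j)) b = i"
      using ray_tdist[OF ray, of "Suc j" i] r(3) tdist_sym[OF _ x, of b] adj_in_V[OF ab] by (simp add: ac_simps)
    ultimately have "r (i + Suc j) \<in> Z0 V adj (a, b)" using x unfolding mem_Z0_iff by simp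
    then show "r (i + Suc j) = f (r (i + Suc j))" using F by simp
  qed
  then have "cofinal r (f \<circ> r)" unfolding cofinal_def comp_def by blast
  then show ?thesis using fixes_ray_end_iff[OF f \<open>is_ray V adj r\<close>] \<open>c = ray_end V adj r\<close> by simp
qed

end

definition branch_point :: "('v \<Rightarrow> 'v \<Rightarrow> bool) \<Rightarrow> 'v \<Rightarrow> bool" where
  "branch_point adj c \<longleftrightarrow> (\<exists>x y z. adj c x \<and> adj c y \<and> adj c z \<and> x \<noteq> y \<and> x \<noteq> z \<and> y \<noteq> z)"

context tree
begin

lemma branch_point_two_children:
  assumes "v \<in> V" "branch_point adj c"
  obtains x y where "x \<noteq> y" "adj c x" "adj c y"
    "tdist V adj v x = tdist V adj v c + 1" "tdist V adj v y = tdist V adj v c + 1"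
proof -
  obtain x y z where xyz: "adj c x" "adj c y" "adj c z" "x \<noteq> y" "x \<noteq> z" "y \<noteq> z"
    using assms(2) unfolding branch_point_def by blast
  have child: "tdist V adj v n = tdist V adj v c + 1"
    if "adj c n" "\<not> tdist V adj v c = tdist V adj v n + 1" for n
    using tdist_adj_cases[OF that(1) assms(1)] that(2) by simp
  have other_child: "tdist V adj v n = tdist V adj v c + 1"
    if "adj c n" "adj c n'" "n \<noteq> n'" "tdist V adj v c = tdist V adj v n' + 1" for n n'
  proof -
    have "\<not> tdist V adj v c = tdist V adj v n + 1"
      using tdist_parent_unique[OF that(1,2) assms(1)] that(3,4) by auto
    then show ?thesis by (rule child[OF that(1)])
  qed
  show ?thesis
  proof (cases "tdist V adj v c = tdist V adj v x + 1")
    case True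
    show ?thesis
      by (rule that[OF xyz(6,2,3) other_child[OF xyz(2,1) _ True] other_child[OF xyz(3,1) _ True]])
        (use xyz in auto)
  next
    case x: False
    show ?thesis
    proof (cases "tdist V adj v c = tdist V adj v y + 1")
      case True
      show ?thesis
        by (rule that[OF xyz(5,1,3) child[OF xyz(1) x] other_child[OF xyz(3,2) _ True]])
          (use xyz in auto)
    next
      case False
      show ?thesis by (rule that[OF xyz(4,1,2) child[OF xyz(1) x] child[OF xyz(2) False]])
    qed
  qed
qed

lemma fixes_vertex_in_Z0:
  assumes leafless: "leafless V adj"
    and branching: "\<And>p q. adj p q \<Longrightarrow> \<exists>c \<in> Z0 V adj (p, q). branch_point adj c"
    and ab: "adj a b" and f: "is_automorphism V adj f" and F: "\<forall>x \<in> ZB V adj (a, b). (\<lambda>s. f \<circ> s) ` x = x"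
  obtains c where "c \<in> Z0 V adj (a, b)" "f c = c"
proof -
  have "a \<in> V" using adj_in_V ab by auto
  obtain c where c: "c \<in> Z0 V adj (a, b)" "branch_point adj c" using branching[OF ab] by blast
  have "c \<in> V" using c unfolding mem_Z0_iff by auto
  obtain x y where xy: "x \<noteq> y" "adj c x" "adj c y"
    "tdist V adj a x = tdist V adj a c + 1" "tdist V adj a y = tdist V adj a c + 1"
    using branch_point_two_children[OF \<open>a \<in> V\<close> c(2)] by blast
  obtain c2 where c2: "c2 \<in> Z0 V adj (c, x)" "branch_point adj c2" using branching[OF xy(2)] by blast
  have "c2 \<in> V" using c2 unfolding mem_Z0_iff by auto
  define p where "p = tdist V adj c c2"
  obtain w where w: "walk V adj w p" "non_backtracking w p" "w 0 = c" "w p = c2"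
    using \<open>c \<in> V\<close> \<open>c2 \<in> V\<close> unfolding p_def by (rule geodesic_exists)
  note wx = geodesic_into_Z0(1,2)[OF xy(2) c2(1) w]
  obtain z z' where zz: "z \<noteq> z'" "adj c2 z" "adj c2 z'" "z \<noteq> w (p - 1)" "z' \<noteq> w (p - 1)"
  proof -
    obtain u u' u'' where "adj c2 u" "adj c2 u'" "adj c2 u''" "u \<noteq> u'" "u \<noteq> u''" "u' \<noteq> u''"
      using c2(2) unfolding branch_point_def by blast
    then show ?thesis using that by (cases "u = w (p - 1)"; cases "u' = w (p - 1)") blast+
  qed
  \<comment> \<open>three rays from \<open>c2\<close>: two continuing away from \<open>c\<close>, one going back through \<open>c\<close> and on via \<open>y\<close>\<close>
  define E where "E = extension_ray adj c2 z"
  define E' where "E' = extension_ray adj c2 z'"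
  define S where "S = extension_ray adj c y"
  define T where "T = walk_append (\<lambda>k. w (p - k)) p S"
  have E: "is_ray V adj E" "E 0 = c2" "E 1 = z" using extension_ray[OF leafless zz(2)] unfolding E_def by auto
  have E': "is_ray V adj E'" "E' 0 = c2" "E' 1 = z'" using extension_ray[OF leafless zz(3)] unfolding E'_def by auto
  have S: "is_ray V adj S" "S 0 = c" "S 1 = y" using extension_ray[OF leafless xy(3)] unfolding S_def by auto
  have T: "is_ray V adj T" "T 0 = c2" "T 1 = w (p - 1)" "T p = c"
    using walk_append_ray[OF walk_rev[OF w(1)] non_backtracking_rev[OF w(2)] S(1)] w(3,4) S(2,3) xy(1) wx
    unfolding T_def walk_append_def by auto
  have "ray_end V adj T = ray_end V adj S" unfolding T_def by (rule ray_end_cong[OF cofinal_walk_append])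
  then have "ray_end V adj T \<in> ZB V adj (a, b)"
    using ray_end_in_ZB[OF ab c(1) S(1,2)] xy(5) S(3) by simp
  moreover have "ray_end V adj E \<in> ZB V adj (a, b)" "ray_end V adj E' \<in> ZB V adj (a, b)"
    using ray_end_in_ZB_beyond[OF ab c(1) w(1-3) wx(1)] wx(2) xy(4) E E' w(4) zz(4,5) by simp_all
  ultimately have fixed_ends: "cofinal E (f \<circ> E)" "cofinal E' (f \<circ> E')" "cofinal T (f \<circ> T)"
    using cofinal_aut_if_fixes_ZB[OF f F] E(1) E'(1) T(1) by auto
  have "f c2 = c2"
    by (rule fixes_tripod_centre[OF f E(1) E'(1) T(1) E(2) E'(2) T(2) _ _ _ fixed_ends])
      (use E E' T zz in auto)
  then have "f \<circ> T = T" using ray_fixed_if_start_fixed[OF f T(1)] fixed_ends(3) T(2) by simp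
  then have "f c = c" using T(4) by (metis comp_apply)
  then show ?thesis using c(1) that by blast
qed

lemma fixes_Z0_if_fixes_ZB:
  assumes "leafless V adj" "\<And>p q. adj p q \<Longrightarrow> \<exists>c \<in> Z0 V adj (p, q). branch_point adj c"
    and "adj a b" "is_automorphism V adj f" "\<forall>x \<in> ZB V adj (a, b). (\<lambda>s. f \<circ> s) ` x = x"
    and "v \<in> Z0 V adj (a, b)"
  shows "f v = v"
proof -
  obtain c where "c \<in> Z0 V adj (a, b)" "f c = c" using fixes_vertex_in_Z0[OF assms(1-5)] .
  then have "f b = b" using fixes_b_if_fixes_vertex[OF assms(1,3-5)] by blast
  then show ?thesis using fixes_Z0_if_fixes_b[OF assms(1,3-5)] assms(6) by blast
qed

section \<open>Trees without branch points\<close>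

lemma no_branching_neighbours:
  assumes "\<not> branch_point adj c" "adj c x" "adj c y" "x \<noteq> y" "adj c z"
  shows "z = x \<or> z = y"
  using assms unfolding branch_point_def by metis

lemma no_branching_walk_eq:
  assumes no_branch: "\<And>c. \<not> branch_point adj c"
    and w: "walk V adj w n" "non_backtracking w n" and w': "walk V adj w' n" "non_backtracking w' n"
    and "w 0 = w' 0" "w 1 = w' 1" "i \<le> n"
  shows "w i = w' i"
  using assms(8)
proof (induction i rule: less_induct)
  case (less i)
  show ?case
  proof (cases "i < 2")
    case True
    then show ?thesis using assms(6,7) by (cases i) (auto simp: less_Suc_eq)
  next
    case False
    then obtain j where j: "i = j + 2" by (metis add.commute le_add_diff_inverse not_less)
    have e: "w j = w' j" "w (Suc j) = w' (Suc j)" using less.IH less.prems j by auto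
    have "adj (w j) (w (Suc j))" "adj (w (Suc j)) (w (j + 2))" "adj (w' (Suc j)) (w' (j + 2))"
      using w(1) w'(1) less.prems j unfolding walk_def by auto
    then have a: "adj (w (Suc j)) (w j)" "adj (w (Suc j)) (w (j + 2))" "adj (w (Suc j)) (w' (j + 2))"
      using adj_sym e(2) by auto
    have "w j \<noteq> w (j + 2)" "w' j \<noteq> w' (j + 2)"
      using w(2) w'(2) less.prems j unfolding non_backtracking_def by auto
    then show ?thesis using no_branching_neighbours[OF no_branch a(1,2) _ a(3)] e(1) j by auto
  qed
qed

lemma no_branching_ray_eq:
  assumes "\<And>c. \<not> branch_point adj c" "is_ray V adj r" "is_ray V adj s" "r 0 = s 0" "r 1 = s 1"
  shows "r = s"
proof
  fix i
  show "r i = s i"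
    by (rule no_branching_walk_eq[OF assms(1) ray_walk[OF assms(2)] ray_non_backtracking[OF assms(2)]
          ray_walk[OF assms(3)] ray_non_backtracking[OF assms(3)]]) (use assms in auto)
qed

lemma no_branching_cofinal_cases_from:
  assumes no_branch: "\<And>c. \<not> branch_point adj c"
    and r: "is_ray V adj r" and s: "is_ray V adj s" and rs: "r 0 = s 0" "r 1 \<noteq> s 1"
    and \<nu>: "is_ray V adj \<nu>" "\<nu> 0 = r n"
  shows "cofinal \<nu> r \<or> cofinal \<nu> s"
proof -
  \<comment> \<open>the two neighbours of \<open>r n\<close> lead along \<open>r\<close>, and back along \<open>r\<close> and then along \<open>s\<close>\<close>
  define \<tau> where "\<tau> = walk_append (\<lambda>k. r (n - k)) n s"
  have \<tau>: "is_ray V adj \<tau>" unfolding \<tau>_def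
    by (rule walk_append_ray[OF walk_rev[OF ray_walk[OF r]] non_backtracking_rev[OF ray_non_backtracking[OF r]] s])
      (use rs in auto)
  have "\<tau> 0 = r n" unfolding \<tau>_def by simp
  have "\<tau> 1 \<noteq> r (Suc n)"
  proof (cases n)
    case 0
    then show ?thesis using rs unfolding \<tau>_def walk_append_def by simp
  next
    case (Suc m)
    moreover have "r m \<noteq> r (m + 2)" using r unfolding is_ray_iff by blast
    ultimately show ?thesis unfolding \<tau>_def walk_append_def by simp
  qed
  moreover have "adj (r n) (\<tau> 1)" "adj (r n) (r (Suc n))" "adj (r n) (\<nu> 1)"
    using ray_adj[OF \<tau>, of 0] ray_adj[OF r, of n] ray_adj[OF \<nu>(1), of 0] \<nu>(2) \<open>\<tau> 0 = r n\<close> by auto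
  ultimately have "\<nu> 1 = \<tau> 1 \<or> \<nu> 1 = r (Suc n)" using no_branching_neighbours[OF no_branch] by blast
  then have "\<nu> = \<tau> \<or> \<nu> = (\<lambda>i. r (i + n))"
    using no_branching_ray_eq[OF no_branch \<nu>(1) \<tau>] no_branching_ray_eq[OF no_branch \<nu>(1) ray_shift[OF r]]
      \<nu>(2) \<open>\<tau> 0 = r n\<close> by auto
  then show ?thesis
    using cofinal_walk_append[of _ n s] cofinal_sym[OF cofinal_shift[of r n]] unfolding \<tau>_def by auto
qed

lemma no_branching_on_opposite_rays:
  assumes no_branch: "\<And>c. \<not> branch_point adj c"
    and r: "is_ray V adj r" and s: "is_ray V adj s" and rs: "r 0 = s 0" "r 1 \<noteq> s 1" and "u \<in> V"
  obtains n where "u = r n \<or> u = s n"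
proof -
  define n where "n = tdist V adj (r 0) u"
  obtain w where w: "walk V adj w n" "non_backtracking w n" "w 0 = r 0" "w n = u"
    using ray_in_V[OF r] \<open>u \<in> V\<close> unfolding n_def by (rule geodesic_exists)
  show ?thesis
  proof (cases "n = 0")
    case True
    then show ?thesis using that[of 0] w(3,4) by simp
  next
    case False
    have "adj (r 0) (w 1)" "adj (r 0) (r 1)" "adj (r 0) (s 1)"
      using w(1,3) False ray_adj[OF r, of 0] ray_adj[OF s, of 0] rs unfolding walk_def by auto
    then consider "w 1 = r 1" | "w 1 = s 1" using no_branching_neighbours[OF no_branch] rs(2) by blast
    then have "w n = r n \<or> w n = s n"
    proof cases
      case 1
      show ?thesis
        using no_branching_walk_eq[OF no_branch w(1,2) ray_walk[OF r] ray_non_backtracking[OF r] w(3) 1 order_refl]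
        by simp
    next
      case 2
      have "w 0 = s 0" using w(3) rs(1) by simp
      then show ?thesis
        using no_branching_walk_eq[OF no_branch w(1,2) ray_walk[OF s] ray_non_backtracking[OF s] _ 2 order_refl]
        by simp
    qed
    then show ?thesis using that w(4) by blast
  qed
qed

lemma no_branching_cofinal_cases:
  assumes no_branch: "\<And>c. \<not> branch_point adj c"
    and r: "is_ray V adj r" and s: "is_ray V adj s" and rs: "r 0 = s 0" "r 1 \<noteq> s 1"
    and \<nu>: "is_ray V adj \<nu>"
  shows "cofinal \<nu> r \<or> cofinal \<nu> s"
proof -
  obtain n where "\<nu> 0 = r n \<or> \<nu> 0 = s n"
    using no_branching_on_opposite_rays[OF no_branch r s rs ray_in_V[OF \<nu>]] by blast
  then show ?thesis
    using no_branching_cofinal_cases_from[OF no_branch r s rs \<nu>]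
      no_branching_cofinal_cases_from[OF no_branch s r rs(1)[symmetric] rs(2)[symmetric] \<nu>] by blast
qed

lemma opposite_rays_not_cofinal:
  assumes r: "is_ray V adj r" and s: "is_ray V adj s" and rs: "r 0 = s 0" "r 1 \<noteq> s 1"
  shows "\<not> cofinal r s"
proof
  assume "cofinal r s"
  then obtain k m where "r (1 + k) = s (1 + m)" unfolding cofinal_def by blast
  moreover have "tdist V adj (s (1 + m)) (r (1 + k)) = (1 + m) + (1 + k)"
    using tdist_opposite_rays[OF r s rs] .
  moreover have "tdist V adj (s (1 + m)) (s (1 + m)) = 0" by (rule tdist_self[OF ray_in_V[OF s]])
  ultimately show False by simp
qed

lemma reflected_walk_fixes_vertex_or_inverts_edge:
  assumes f: "is_automorphism V adj f" and W: "walk V adj W N" and "M \<le> 2 * N"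
    and reflect: "\<And>j. j \<le> N \<Longrightarrow> j \<le> M \<Longrightarrow> M - j \<le> N \<Longrightarrow> f (W j) = W (M - j)"
  shows "(\<exists>v\<in>V. f v = v) \<or> (\<exists>u v. adj u v \<and> f u = v \<and> f v = u)"
proof (cases "even M")
  case True
  then have "M - M div 2 = M div 2" "M div 2 \<le> N" using assms(3) by auto
  then have "f (W (M div 2)) = W (M div 2)" "W (M div 2) \<in> V"
    using reflect[of "M div 2"] W unfolding walk_def by auto
  then show ?thesis by blast
next
  case False
  define t where "t = M div 2"
  have t: "M - t = Suc t" "M - Suc t = t" "Suc t \<le> N" "Suc t \<le> M"
    using False assms(3) odd_two_times_div_two_succ[OF False] unfolding t_def by arith+
  then have "f (W t) = W (Suc t)" "f (W (Suc t)) = W t" "adj (W t) (W (Suc t))"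
    using reflect[of t] reflect[of "Suc t"] W unfolding walk_def by auto
  then show ?thesis by blast
qed

lemma hyperbolic_aut: "hyperbolic V adj h \<Longrightarrow> is_automorphism V adj h"
  unfolding hyperbolic_def by auto

lemma hyperbolic_no_fixed_vertex_or_inverted_edge:
  "hyperbolic V adj h \<Longrightarrow> \<not> ((\<exists>v\<in>V. h v = v) \<or> (\<exists>u v. adj u v \<and> h u = v \<and> h v = u))"
  unfolding hyperbolic_def using adj_in_V by blast

lemma hyperbolic_not_swapping_opposite_ends:
  assumes h: "hyperbolic V adj h" and r: "is_ray V adj r" and s: "is_ray V adj s"
    and rs: "r 0 = s 0" "r 1 \<noteq> s 1" and rh: "cofinal (h \<circ> r) s" and sh: "cofinal (h \<circ> s) r"
  shows False
proof -
  have f: "is_automorphism V adj h" using hyperbolic_aut[OF h] .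
  obtain k m where km: "\<forall>i. h (r (i + k)) = s (i + m)" using rh unfolding cofinal_def by auto
  obtain k' m' where km': "\<forall>i. h (s (i + k')) = r (i + m')" using sh unfolding cofinal_def by auto
  define K where "K = k + k'"
  define A where "A = k + m'"
  define B where "B = k' + m"
  have hrK: "h (r K) = s B" using km[rule_format, of k'] unfolding K_def B_def by (simp add: ac_simps)
  have hsK: "h (s K) = r A" using km'[rule_format, of k] unfolding K_def A_def by (simp add: ac_simps)
  have sr: "s 0 = r 0" "s 1 \<noteq> r 1" using rs by auto
  have AB: "A + B = K + K"
  proof -
    have "K + K = tdist V adj (s K) (r K)" using tdist_opposite_rays[OF r s rs] by simp
    also have "\<dots> = tdist V adj (h (s K)) (h (r K))"
      using aut_tdist[OF f ray_in_V[OF s] ray_in_V[OF r]] by simp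
    also have "\<dots> = A + B" using hrK hsK tdist_opposite_rays[OF s r sr] by simp
    finally show ?thesis by simp
  qed
  \<comment> \<open>\<open>h\<close> maps the segment of the line from \<open>s K\<close> to \<open>r K\<close> onto the one from \<open>r A\<close> to \<open>s B\<close>,
    reversing its direction\<close>
  define W where "W = walk_append (\<lambda>j. s (K - j)) K r"
  define W' where "W' = walk_append (\<lambda>j. r (A - j)) A s"
  have L: "walk V adj W (K + K)" "non_backtracking W (K + K)" "W 0 = s K" "W (K + K) = r K"
    using opposite_rays_walk[OF r s rs] unfolding W_def by blast+
  have L': "walk V adj W' (A + B)" "non_backtracking W' (A + B)" "W' 0 = r A" "W' (A + B) = s B"
    using opposite_rays_walk[OF s r sr] unfolding W'_def by blast+
  have "W' j = W (K + A - j)" if "j \<le> K + A" for j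
    using that rs unfolding W_def W'_def walk_append_def by auto
  moreover have "h (W j) = W' j" if "j \<le> K + K" for j
    using non_backtracking_walk_eq[OF aut_walk[OF f L(1)] aut_non_backtracking[OF f L(1,2)] _ _ _ _ that]
      L'(1-4) L(3,4) hrK hsK AB by simp
  ultimately have "(\<exists>v\<in>V. h v = v) \<or> (\<exists>u v. adj u v \<and> h u = v \<and> h v = u)"
    using reflected_walk_fixes_vertex_or_inverts_edge[OF f L(1), of "K + A"] AB by simp
  then show False using hyperbolic_no_fixed_vertex_or_inverted_edge[OF h] by blast
qed

lemma no_branching_hyperbolic_fixes_end:
  assumes no_branch: "\<And>c. \<not> branch_point adj c" and h: "hyperbolic V adj h"
    and r: "is_ray V adj r" and s: "is_ray V adj s" and rs: "r 0 = s 0" "r 1 \<noteq> s 1"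
  shows "cofinal r (h \<circ> r)"
proof -
  have f: "is_automorphism V adj h" using hyperbolic_aut[OF h] .
  have hr: "is_ray V adj (h \<circ> r)" "is_ray V adj (h \<circ> s)" using aut_ray[OF f] r s by auto
  consider "cofinal (h \<circ> r) r" | "cofinal (h \<circ> r) s"
    using no_branching_cofinal_cases[OF no_branch r s rs hr(1)] by blast
  then show ?thesis
  proof cases
    case 1
    then show ?thesis by (rule cofinal_sym)
  next
    case rh: 2
    consider "cofinal (h \<circ> s) r" | "cofinal (h \<circ> s) s"
      using no_branching_cofinal_cases[OF no_branch r s rs hr(2)] by blast
    then show ?thesis
    proof cases
      case 1
      then show ?thesis using hyperbolic_not_swapping_opposite_ends[OF h r s rs rh] by blast
    next
      case 2
      have "cofinal (inv_into V h \<circ> (h \<circ> r)) (inv_into V h \<circ> (h \<circ> s))"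
        using cofinal_comp[OF cofinal_trans[OF rh cofinal_sym[OF 2]]] .
      then have "cofinal r s" using aut_inv_into_comp(2)[OF f] r s by simp
      then show ?thesis using opposite_rays_not_cofinal[OF r s rs] by blast
    qed
  qed
qed

lemma no_branching_hyperbolics_share_fixed_point:
  assumes no_branch: "\<And>c. \<not> branch_point adj c" and leafless: "leafless V adj"
    and h1: "hyperbolic V adj h1" and h2: "hyperbolic V adj h2"
  shows "fixed_points V adj h1 \<inter> fixed_points V adj h2 \<noteq> {}"
proof -
  obtain v where "v \<in> V" using V_nonempty by blast
  then obtain x y where xy: "adj v x" "adj v y" "x \<noteq> y" using leafless unfolding leafless_def by blast
  define r where "r = extension_ray adj v x"
  define s where "s = extension_ray adj v y"
  have r: "is_ray V adj r" "r 0 = v" "r 1 = x" using extension_ray[OF leafless xy(1)] unfolding r_def by auto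
  have s: "is_ray V adj s" "s 0 = v" "s 1 = y" using extension_ray[OF leafless xy(2)] unfolding s_def by auto
  have rs: "r 0 = s 0" "r 1 \<noteq> s 1" using r s xy by auto
  have "Inr (ray_end V adj r) \<in> fixed_points V adj h" if "hyperbolic V adj h" for h
  proof -
    have "(\<lambda>\<rho>. h \<circ> \<rho>) ` ray_end V adj r = ray_end V adj r"
      using fixes_ray_end_iff[OF hyperbolic_aut[OF that] r(1)]
        no_branching_hyperbolic_fixes_end[OF no_branch that r(1) s(1) rs] by blast
    then show ?thesis
      unfolding fixed_points_def points_def act_pt_def using ray_end_in_boundary[OF r(1)] by auto
  qed
  then show ?thesis using h1 h2 by blast
qed

end

section \<open>Minimal actions\<close>

definition geodesically_convex :: "'v set \<Rightarrow> ('v \<Rightarrow> 'v \<Rightarrow> bool) \<Rightarrow> 'v set \<Rightarrow> bool" where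
  "geodesically_convex V adj W \<longleftrightarrow>
     (\<forall>w n. walk V adj w n \<longrightarrow> non_backtracking w n \<longrightarrow> w 0 \<in> W \<longrightarrow> w n \<in> W \<longrightarrow> (\<forall>i\<le>n. w i \<in> W))"

definition branchless_edges :: "'v set \<Rightarrow> ('v \<Rightarrow> 'v \<Rightarrow> bool) \<Rightarrow> ('v \<times> 'v) set" where
  "branchless_edges V adj = {e \<in> edges V adj. \<forall>c\<in>Z0 V adj e. \<not> branch_point adj c}"

context tree
begin

lemma geodesically_convex_subtree:
  assumes "W \<subseteq> V" "W \<noteq> {}" "geodesically_convex V adj W"
  shows "subtree V adj W"
  unfolding subtree_def
proof (intro conjI ballI)
  fix u v assume "u \<in> W" "v \<in> W"
  then obtain w where w: "walk V adj w (tdist V adj u v)" "non_backtracking w (tdist V adj u v)"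
    "w 0 = u" "w (tdist V adj u v) = v"
    using assms(1) geodesic_exists by blast
  moreover have "w 0 \<in> W" "w (tdist V adj u v) \<in> W" using w(3,4) \<open>u \<in> W\<close> \<open>v \<in> W\<close> by simp_all
  ultimately have "\<forall>i\<le>tdist V adj u v. w i \<in> W"
    using assms(3) unfolding geodesically_convex_def by blast
  then have "walk W adj w (tdist V adj u v)" using w(1) unfolding walk_def by auto
  then show "\<exists>p. is_path W adj p \<and> hd p = u \<and> last p = v"
    using ex_path_iff_ex_walk w(3,4) by metis
qed (use assms in auto)

lemma tdist_across_edge:
  assumes pq: "adj p q" and "u \<in> V" "x \<in> V"
    and du: "tdist V adj u q = tdist V adj u p + 1" and dx: "tdist V adj x p = tdist V adj x q + 1"
  shows "tdist V adj u x = tdist V adj u p + 1 + tdist V adj q x"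
proof -
  have "p \<in> V" "q \<in> V" using adj_in_V pq by auto
  define n1 where "n1 = tdist V adj u p"
  define n2 where "n2 = tdist V adj q x"
  obtain w1 where w1: "walk V adj w1 n1" "non_backtracking w1 n1" "w1 0 = u" "w1 n1 = p"
    using \<open>u \<in> V\<close> \<open>p \<in> V\<close> unfolding n1_def by (rule geodesic_exists)
  obtain w2 where w2: "walk V adj w2 n2" "non_backtracking w2 n2" "w2 0 = q" "w2 n2 = x"
    using \<open>q \<in> V\<close> \<open>x \<in> V\<close> unfolding n2_def by (rule geodesic_exists)
  have "0 < n1 \<longrightarrow> w1 (n1 - 1) \<noteq> q"
    using tdist_non_backtracking_sub[OF w1(1,2), of 0 "n1 - 1"] du w1(3) unfolding n1_def by auto
  note e = walk_append_edge[OF w1(1,2) _ this, unfolded w1(4), OF pq]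
  have "0 < n2 \<longrightarrow> w2 1 \<noteq> p"
    using tdist_non_backtracking_sub[OF w2(1,2), of 1 n2] dx w2(4) tdist_sym[OF \<open>x \<in> V\<close> \<open>p \<in> V\<close>]
      tdist_sym[OF \<open>x \<in> V\<close> \<open>q \<in> V\<close>] unfolding n2_def by auto
  moreover have "walk_append w1 n1 (edge_walk p q) (Suc n1 - 1) = p" using e(5)[of n1] w1(4) by simp
  ultimately have "0 < Suc n1 \<and> 0 < n2 \<longrightarrow> walk_append w1 n1 (edge_walk p q) (Suc n1 - 1) \<noteq> w2 1"
    by auto
  then have N: "non_backtracking (walk_append (walk_append w1 n1 (edge_walk p q)) (Suc n1) w2) (Suc n1 + n2)"
    using walk_append_non_backtracking[OF e(2) w2(2)] e(4) w2(3) by simp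
  have W: "walk V adj (walk_append (walk_append w1 n1 (edge_walk p q)) (Suc n1) w2) (Suc n1 + n2)"
    using walk_append_walk[OF e(1) w2(1)] e(4) w2(3) by simp
  have "tdist V adj (walk_append (walk_append w1 n1 (edge_walk p q)) (Suc n1) w2 0)
      (walk_append (walk_append w1 n1 (edge_walk p q)) (Suc n1) w2 (Suc n1 + n2)) = Suc n1 + n2"
    by (rule tdist_non_backtracking[OF W N])
  then show ?thesis
    using walk_append_end[of w2 "walk_append w1 n1 (edge_walk p q)" "Suc n1" n2]
      e(3,4) w1(3) w2(3,4) unfolding n1_def n2_def by simp
qed

lemma geodesically_convex_complement_Z0:
  assumes pq: "adj p q"
  shows "geodesically_convex V adj (V - Z0 V adj (p, q))"
  unfolding geodesically_convex_def
proof (intro allI impI, rule ccontr)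
  fix w n i
  assume w: "walk V adj w n" "non_backtracking w n" "w 0 \<in> V - Z0 V adj (p, q)" "w n \<in> V - Z0 V adj (p, q)"
    and "i \<le> n" and "w i \<notin> V - Z0 V adj (p, q)"
  have "p \<in> V" using adj_in_V pq by auto
  have "w i \<in> V" using w(1) \<open>i \<le> n\<close> unfolding walk_def by auto
  then have x: "w i \<in> Z0 V adj (p, q)" using \<open>w i \<notin> V - Z0 V adj (p, q)\<close> by simp
  have closer_p: "tdist V adj u q = tdist V adj u p + 1" if "u \<in> V - Z0 V adj (p, q)" for u
    using that tdist_adj_cases[OF pq, of u] by (auto simp: mem_Z0_iff)
  \<comment> \<open>the walk would have to cross the edge twice, making it longer than a geodesic\<close>
  have "tdist V adj (w 0) (w i) = tdist V adj (w 0) p + 1 + tdist V adj q (w i)"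
    "tdist V adj (w n) (w i) = tdist V adj (w n) p + 1 + tdist V adj q (w i)"
    using tdist_across_edge[OF pq _ \<open>w i \<in> V\<close> closer_p tdist_Z0[OF pq x]] w(3,4) by auto
  moreover have "tdist V adj (w 0) (w i) = i" "tdist V adj (w i) (w n) = n - i" "tdist V adj (w 0) (w n) = n"
    using tdist_non_backtracking_sub[OF w(1,2)] \<open>i \<le> n\<close> by auto
  moreover have "tdist V adj (w 0) (w n) \<le> tdist V adj (w 0) p + tdist V adj (w n) p"
    using tdist_triangle[of "w 0" p "w n"] tdist_sym[of p "w n"] w(3,4) \<open>p \<in> V\<close> by auto
  moreover have "tdist V adj (w i) (w n) = tdist V adj (w n) (w i)"
    using tdist_sym \<open>w i \<in> V\<close> w(4) by auto
  ultimately show False using \<open>i \<le> n\<close> by linarith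
qed

lemma aut_branch_point:
  assumes f: "is_automorphism V adj f" and "branch_point adj c"
  shows "branch_point adj (f c)"
proof -
  obtain x y z where xyz: "adj c x" "adj c y" "adj c z" "x \<noteq> y" "x \<noteq> z" "y \<noteq> z"
    using assms(2) unfolding branch_point_def by blast
  then have "x \<in> V" "y \<in> V" "z \<in> V" using adj_in_V by auto
  then have "f x \<noteq> f y" "f x \<noteq> f z" "f y \<noteq> f z" using aut_inj[OF f] xyz(4-6) by blast+
  moreover have "adj (f c) (f x)" "adj (f c) (f y)" "adj (f c) (f z)" using aut_adj[OF f] xyz(1-3) by auto
  ultimately show ?thesis unfolding branch_point_def by blast
qed

lemma aut_avoids_branchless_half_trees:
  assumes f: "is_automorphism V adj f" and "v \<in> V"
    and avoids: "\<forall>e\<in>branchless_edges V adj. v \<notin> Z0 V adj e"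
  shows "\<forall>e\<in>branchless_edges V adj. f v \<notin> Z0 V adj e"
proof (intro ballI notI)
  fix e assume e: "e \<in> branchless_edges V adj" "f v \<in> Z0 V adj e"
  then obtain p' q' where pq': "e = (p', q')" "adj p' q'" unfolding branchless_edges_def edges_def by auto
  obtain p where p: "p \<in> V" "f p = p'" using aut_surj[OF f] adj_in_V[OF pq'(2)] by blast
  obtain q where q: "q \<in> V" "f q = q'" using aut_surj[OF f] adj_in_V[OF pq'(2)] by blast
  have "adj p q" using aut_adj_iff[OF f p(1) q(1)] pq'(2) p(2) q(2) by simp
  moreover have "\<not> branch_point adj c" if "c \<in> Z0 V adj (p, q)" for c
  proof
    assume "branch_point adj c"
    then have "branch_point adj (f c)" by (rule aut_branch_point[OF f])
    moreover have "c \<in> V" using that unfolding mem_Z0_iff by simp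
    then have "f c \<in> Z0 V adj (p', q')" using aut_Z0_iff[OF f _ p(1) q(1)] that p(2) q(2) by simp
    ultimately show False using e(1) pq'(1) unfolding branchless_edges_def by blast
  qed
  ultimately have "(p, q) \<in> branchless_edges V adj" using p(1) q(1) unfolding branchless_edges_def edges_def by simp
  moreover have "v \<in> Z0 V adj (p, q)" using aut_Z0_iff[OF f \<open>v \<in> V\<close> p(1) q(1)] e(2) pq'(1) p(2) q(2) by simp
  ultimately show False using avoids by blast
qed

lemma geodesically_convex_Inter:
  "(\<And>W. W \<in> \<W> \<Longrightarrow> geodesically_convex V adj W) \<Longrightarrow> geodesically_convex V adj (V \<inter> \<Inter>\<W>)"
  unfolding geodesically_convex_def walk_def by blast

lemma geodesically_convex_outside_half_trees:
  assumes "H \<subseteq> edges V adj"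
  shows "geodesically_convex V adj (V \<inter> (\<Inter>e\<in>H. V - Z0 V adj e))"
proof (rule geodesically_convex_Inter)
  fix W assume "W \<in> (\<lambda>e. V - Z0 V adj e) ` H"
  then obtain a b where "(a, b) \<in> H" "W = V - Z0 V adj (a, b)" by auto
  then show "geodesically_convex V adj W"
    using assms geodesically_convex_complement_Z0 unfolding edges_def by auto
qed

lemma geodesically_convex_non_leaves:
  "geodesically_convex V adj {v \<in> V. \<exists>x y. adj v x \<and> adj v y \<and> x \<noteq> y}"
  unfolding geodesically_convex_def
proof (intro allI impI)
  fix w n i
  assume w: "walk V adj w n" "non_backtracking w n" "w 0 \<in> {v \<in> V. \<exists>x y. adj v x \<and> adj v y \<and> x \<noteq> y}"
    "w n \<in> {v \<in> V. \<exists>x y. adj v x \<and> adj v y \<and> x \<noteq> y}" and "i \<le> n"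
  show "w i \<in> {v \<in> V. \<exists>x y. adj v x \<and> adj v y \<and> x \<noteq> y}"
  proof (cases "i = 0 \<or> i = n")
    case True
    then show ?thesis using w by auto
  next
    case False
    then obtain j where j: "i = Suc j" "Suc i \<le> n" using \<open>i \<le> n\<close> by (cases i) auto
    then have "adj (w j) (w i)" "adj (w i) (w (Suc i))" "w j \<noteq> w (Suc i)" "w i \<in> V"
      using w(1,2) unfolding walk_def non_backtracking_def by auto
    then show ?thesis using adj_sym[of "w j" "w i"] by blast
  qed
qed

lemma hyperbolic_non_leaf_exists:
  assumes h: "hyperbolic V adj h"
  shows "\<exists>v\<in>V. \<exists>x y. adj v x \<and> adj v y \<and> x \<noteq> y"
proof (rule ccontr)
  assume no_inner: "\<not> ?thesis"
  have f: "is_automorphism V adj h" using hyperbolic_aut[OF h] .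
  obtain v where "v \<in> V" using V_nonempty by blast
  define n where "n = tdist V adj v (h v)"
  obtain w where w: "walk V adj w n" "non_backtracking w n" "w 0 = v" "w n = h v"
    using \<open>v \<in> V\<close> aut_in_V[OF f \<open>v \<in> V\<close>] unfolding n_def by (rule geodesic_exists)
  \<comment> \<open>the geodesic from \<open>v\<close> to \<open>h v\<close> has no interior vertex, so it is an edge that \<open>h\<close> inverts\<close>
  have "h v \<noteq> v" using h \<open>v \<in> V\<close> unfolding hyperbolic_def by blast
  then have "n \<noteq> 0" using w(3,4) by (metis)
  moreover have "\<not> 2 \<le> n"
  proof
    assume "2 \<le> n"
    then have "adj (w 0) (w 1)" "adj (w 1) (w 2)" "w 0 \<noteq> w 2" "w 1 \<in> V"
      using w(1,2) unfolding walk_def non_backtracking_def by (auto simp: numeral_2_eq_2)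
    then show False using no_inner adj_sym[of "w 0" "w 1"] by blast
  qed
  ultimately have "n = 1" by simp
  then have a: "adj v (h v)" using w unfolding walk_def by auto
  then have "adj (h v) (h (h v))" "adj (h v) v" "h v \<in> V" using aut_adj[OF f a] adj_sym[OF a] adj_in_V[OF a] by auto
  then have "h (h v) = v" using no_inner by blast
  then show False using a h \<open>v \<in> V\<close> \<open>h v \<in> V\<close> unfolding hyperbolic_def by blast
qed

end

lemma fixator_antimono: "S \<subseteq> T \<Longrightarrow> fixator G \<phi> T \<subseteq> fixator G \<phi> S"
  unfolding fixator_def by blast

lemma ZB_subset_boundary_closure: "Inr ` ZB V adj e \<subseteq> boundary_closure V adj"
proof -
  have "Inr ` boundary V adj \<subseteq> topspace (shadow_topology V adj)"
    unfolding shadow_topology_def points_def by auto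
  then have "Inr ` boundary V adj \<subseteq> boundary_closure V adj"
    unfolding boundary_closure_def by (rule closure_of_subset)
  then show ?thesis unfolding ZB_def by auto
qed

locale minimal_tree_action =
  fixes G :: "('g, 'b) monoid_scheme" and V :: "'v set" and adj :: "'v \<Rightarrow> 'v \<Rightarrow> bool"
    and \<phi> :: "'g \<Rightarrow> 'v \<Rightarrow> 'v"
  assumes acts: "acts_on_tree G V adj \<phi>" and minimal: "minimal_action G V adj \<phi>"
begin

sublocale tree V adj
  using acts unfolding acts_on_tree_def tree_def by simp

lemma aut_action: "g \<in> carrier G \<Longrightarrow> is_automorphism V adj (\<phi> g)"
  using acts unfolding acts_on_tree_def by simp

lemma invariant_convex_eq_V:
  assumes "W \<subseteq> V" "W \<noteq> {}" "geodesically_convex V adj W" "\<And>g v. g \<in> carrier G \<Longrightarrow> v \<in> W \<Longrightarrow> \<phi> g v \<in> W"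
  shows "W = V"
  using minimal geodesically_convex_subtree[OF assms(1-3)] assms(4) unfolding minimal_action_def by blast

end

context minimal_tree_action
begin

lemma leafless_if_hyperbolic:
  assumes "hyperbolic V adj h"
  shows "leafless V adj"
proof -
  let ?W = "{v \<in> V. \<exists>x y. adj v x \<and> adj v y \<and> x \<noteq> y}"
  have "?W = V"
  proof (rule invariant_convex_eq_V)
    show "?W \<noteq> {}" using hyperbolic_non_leaf_exists[OF assms] by blast
  next
    fix g v assume g: "g \<in> carrier G" and "v \<in> ?W"
    then obtain x y where xy: "v \<in> V" "adj v x" "adj v y" "x \<noteq> y" by blast
    note f = aut_action[OF g]
    have "\<phi> g x \<noteq> \<phi> g y" using aut_inj[OF f] adj_in_V[OF xy(2)] adj_in_V[OF xy(3)] xy(4) by blast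
    moreover have "adj (\<phi> g v) (\<phi> g x)" "adj (\<phi> g v) (\<phi> g y)" "\<phi> g v \<in> V"
      using aut_adj[OF f xy(2)] aut_adj[OF f xy(3)] aut_in_V[OF f xy(1)] by auto
    ultimately show "\<phi> g v \<in> ?W" by blast
  qed (use geodesically_convex_non_leaves in auto)
  then show ?thesis unfolding leafless_def by blast
qed

text \<open>Minimality puts a branch point into every half-tree: otherwise the vertices outside all
  branchless half-trees form a proper invariant subtree, or, if there are none, the tree is a line,
  on which any two hyperbolic automorphisms share their fixed ends.\<close>

lemma branch_point_in_Z0:
  assumes sh: "strongly_hyperbolic G V adj \<phi>" and pq: "adj p q"
  shows "\<exists>c \<in> Z0 V adj (p, q). branch_point adj c"
proof (rule ccontr)
  obtain g1 g2 where g: "hyperbolic V adj (\<phi> g1)" "hyperbolic V adj (\<phi> g2)"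
    "fixed_points V adj (\<phi> g1) \<inter> fixed_points V adj (\<phi> g2) = {}"
    using sh unfolding strongly_hyperbolic_def by blast
  define W where "W = V \<inter> (\<Inter>e\<in>branchless_edges V adj. V - Z0 V adj e)"
  assume "\<not> (\<exists>c \<in> Z0 V adj (p, q). branch_point adj c)"
  then have "(p, q) \<in> branchless_edges V adj" using pq adj_in_V unfolding branchless_edges_def edges_def by auto
  moreover have "q \<in> Z0 V adj (p, q)"
    using tdist_self tdist_adj[OF adj_sym[OF pq]] adj_in_V[OF pq] unfolding mem_Z0_iff by simp
  ultimately have "W \<noteq> V" using adj_in_V[OF pq] unfolding W_def by blast
  moreover have "W = V"
  proof (rule invariant_convex_eq_V)
    show "W \<subseteq> V" unfolding W_def by blast
    show "W \<noteq> {}"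
    proof
      assume "W = {}"
      have "\<not> branch_point adj c" for c
      proof
        assume c: "branch_point adj c"
        then have "c \<in> V" using adj_in_V unfolding branch_point_def by blast
        then obtain e where "e \<in> branchless_edges V adj" "c \<in> Z0 V adj e" using \<open>W = {}\<close> unfolding W_def by blast
        then show False using c unfolding branchless_edges_def by blast
      qed
      then have "fixed_points V adj (\<phi> g1) \<inter> fixed_points V adj (\<phi> g2) \<noteq> {}"
        using no_branching_hyperbolics_share_fixed_point[OF _ leafless_if_hyperbolic[OF g(1)] g(1,2)] by blast
      then show False using g(3) by blast
    qed
    show "geodesically_convex V adj W"
      unfolding W_def by (rule geodesically_convex_outside_half_trees) (auto simp: branchless_edges_def)
  next
    fix g v assume g: "g \<in> carrier G" and "v \<in> W"
    then have "v \<in> V" "\<forall>e\<in>branchless_edges V adj. v \<notin> Z0 V adj e" unfolding W_def by blast+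
    then show "\<phi> g v \<in> W"
      using aut_avoids_branchless_half_trees[OF aut_action[OF g]] aut_in_V[OF aut_action[OF g]]
      unfolding W_def by blast
  qed
  ultimately show False by blast
qed

lemma fixator_Z0_subset_fixator_ZB:
  assumes "e \<in> edges V adj"
  shows "fixator G \<phi> (Inl ` Z0 V adj e) \<subseteq> fixator G \<phi> (Inr ` ZB V adj e)"
proof
  fix g assume g: "g \<in> fixator G \<phi> (Inl ` Z0 V adj e)"
  obtain a b where e: "e = (a, b)" "adj a b" using assms unfolding edges_def by auto
  have "g \<in> carrier G" "\<forall>v\<in>Z0 V adj (a, b). \<phi> g v = v"
    using g e(1) unfolding fixator_def act_pt_def by auto
  then show "g \<in> fixator G \<phi> (Inr ` ZB V adj e)"
    using fixes_ZB_if_fixes_Z0[OF e(2) aut_action] e(1) unfolding fixator_def act_pt_def by auto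
qed

lemma fixator_ZB_subset_fixator_Z:
  assumes "strongly_hyperbolic G V adj \<phi>" "e \<in> edges V adj"
  shows "fixator G \<phi> (Inr ` ZB V adj e) \<subseteq> fixator G \<phi> (Z V adj e)"
proof
  fix g assume g: "g \<in> fixator G \<phi> (Inr ` ZB V adj e)"
  obtain a b where e: "e = (a, b)" "adj a b" using assms(2) unfolding edges_def by auto
  obtain h where "hyperbolic V adj h" using assms(1) unfolding strongly_hyperbolic_def by blast
  have "g \<in> carrier G" "\<forall>x \<in> ZB V adj (a, b). (\<lambda>s. \<phi> g \<circ> s) ` x = x"
    using g e(1) unfolding fixator_def act_pt_def by auto
  then have "\<forall>v\<in>Z0 V adj (a, b). \<phi> g v = v"
    using fixes_Z0_if_fixes_ZB[OF leafless_if_hyperbolic[OF \<open>hyperbolic V adj h\<close>]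
        branch_point_in_Z0[OF assms(1)] e(2) aut_action] by blast
  then show "g \<in> fixator G \<phi> (Z V adj e)"
    using g e(1) unfolding fixator_def Z_def act_pt_def by auto
qed

lemma fixator_Z0_eq_fixator_ZB:
  assumes "strongly_hyperbolic G V adj \<phi>" "e \<in> edges V adj"
  shows "fixator G \<phi> (Inl ` Z0 V adj e) = fixator G \<phi> (Inr ` ZB V adj e)"
proof (rule subset_antisym)
  show "fixator G \<phi> (Inl ` Z0 V adj e) \<subseteq> fixator G \<phi> (Inr ` ZB V adj e)"
    by (rule fixator_Z0_subset_fixator_ZB[OF assms(2)])
  have "Inl ` Z0 V adj e \<subseteq> Z V adj e" unfolding Z_def by (rule Un_upper1)
  from order_trans[OF fixator_ZB_subset_fixator_Z[OF assms] fixator_antimono[OF this]]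
  show "fixator G \<phi> (Inr ` ZB V adj e) \<subseteq> fixator G \<phi> (Inl ` Z0 V adj e)" .
qed

lemma fixator_ZB_eq_fixator_Z_Int_closure:
  assumes "strongly_hyperbolic G V adj \<phi>" "e \<in> edges V adj"
  shows "fixator G \<phi> (Inr ` ZB V adj e) = fixator G \<phi> (Z V adj e \<inter> boundary_closure V adj)"
proof (rule subset_antisym)
  show "fixator G \<phi> (Inr ` ZB V adj e) \<subseteq> fixator G \<phi> (Z V adj e \<inter> boundary_closure V adj)"
    using fixator_ZB_subset_fixator_Z[OF assms] fixator_antimono[OF Int_lower1] by (rule order_trans)
  have "Inr ` ZB V adj e \<subseteq> Z V adj e \<inter> boundary_closure V adj"
    using ZB_subset_boundary_closure unfolding Z_def by blast
  then show "fixator G \<phi> (Z V adj e \<inter> boundary_closure V adj) \<subseteq> fixator G \<phi> (Inr ` ZB V adj e)"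
    by (rule fixator_antimono)
qed

end

theorem mainTheorem9:
  fixes G :: "('g, 'b) monoid_scheme" and V :: "'v set" and adj :: "'v \<Rightarrow> 'v \<Rightarrow> bool"
    and \<phi> :: "'g \<Rightarrow> 'v \<Rightarrow> 'v" and e :: "'v \<times> 'v" and g :: 'g
  assumes "acts_on_tree G V adj \<phi>"
    and "minimal_action G V adj \<phi>"
    and "strongly_hyperbolic G V adj \<phi>"
    and "e \<in> edges V adj"
    and "g \<in> carrier G"
    and "\<forall>x \<in> Inr ` ZB V adj e. act_pt (\<phi> g) x = x"
  shows "(\<forall>x \<in> Z V adj e. act_pt (\<phi> g) x = x)
    \<and> fixator G \<phi> (Inl ` Z0 V adj e) = fixator G \<phi> (Inr ` ZB V adj e)
    \<and> fixator G \<phi> (Inr ` ZB V adj e) = fixator G \<phi> (Z V adj e \<inter> boundary_closure V adj)"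
proof -
  interpret minimal_tree_action G V adj \<phi> using assms(1,2) by unfold_locales
  have "g \<in> fixator G \<phi> (Inr ` ZB V adj e)" using assms(5,6) unfolding fixator_def by blast
  then have "\<forall>x \<in> Z V adj e. act_pt (\<phi> g) x = x"
    using fixator_ZB_subset_fixator_Z[OF assms(3,4)] unfolding fixator_def by blast
  then show ?thesis
    using fixator_Z0_eq_fixator_ZB[OF assms(3,4)] fixator_ZB_eq_fixator_Z_Int_closure[OF assms(3,4)] by simp
qed

end
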